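(* Let $k\ge1$, let $\mathbf r=(r_1,\dots,r_k),\mathbf s=(s_1,\dots,s_k)\in\{1,\dots,n\}^k$ be fixed and let $j\in\{1,\dots,n\}$. Then, modulo the two-sided ideal of $\mathcal A$ generated by $\mathfrak{det}_q^{(1)}$, \[\sum_{j<j_1<j_2<\dots<j_k\le n}(\mathbf r|j_k\ldots j_2j_1)_r(\mathbf s|j_1j_2\ldots j_k)^*_r\equiv(-1)^kq^{2\sum_{i=0}^{k-1}i}\sum_{j_1<j_2<\dots<j_k\le j}(\mathbf r|j_k\ldots j_2j_1)_r(\mathbf s|j_1j_2\ldots j_k)^*_r.\]
   Context: $R$ commutative ring with $1$, $q\in R$ invertible, $n\ge1$. $\mathcal A$ is the quotient of the tensor product of the free $R$-algebras on $x_{ij}$ and on $x^*_{ij}$ ($1\le i,j\le n$; write $ab$ for $a\otimes b$; multiplication concatenates $x$-parts and $x^*$-parts separately) by the two-sided ideal generated by: $x_{ik}x_{jk}-qx_{jk}x_{ik}$ ($i<j$); $x_{ki}x_{kj}-qx_{kj}x_{ki}$ ($i<j$); $x_{ij}x_{kl}-x_{kl}x_{ij}$ ($i<k,j>l$); $x_{ij}x_{kl}-x_{kl}x_{ij}-(q-q^{-1})x_{il}x_{kj}$ ($i<k,j<l$); the same four with $x^*,q^{-1}$ in place of $x,q$; $\sum_kx_{ik}x^*_{jk}$ and $\sum_kq^{2k}x_{ki}x^*_{kj}$ ($i\ne j$); $\sum_kq^{2k-2i}x_{ki}x^*_{ki}-\sum_kx_{jk}x^*_{jk}$. $\mathfrak{det}_q^{(1)}=\sum_lx_{1l}x^*_{1l}$.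 Right quantum minors: for $i_1<\dots<i_k$ and arbitrary $j_1,\dots,j_k$, $(i_1\ldots i_k|j_1\ldots j_k)_r=\sum_{w\in\mathfrak S_k}(-q)^{l(w)}x_{i_{w1}j_1}\cdots x_{i_{wk}j_k}$; for general $i$'s, $(\ldots i_li_{l+1}\ldots|j)_r=-q^{-1}(\ldots i_{l+1}i_l\ldots|j)_r$ whenever $i_l>i_{l+1}$, and the minor is $0$ if two $i$'s coincide. The starred minors $(\ldots|\ldots)^*_r$ are defined in the same way with $x^*_{ij}$ in place of $x_{ij}$ and $q^{-1}$ in place of $q$. *)

theory Defs
  imports Main "HOL-Combinatorics.Permutations"
begin

text \<open>Elements of the free product algebra: functions on pairs of words
(x-word, x*-word) to the coefficient ring.
Multiplication concatenates x-parts and x*-parts separately.\<close>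

type_synonym word = "(nat \<times> nat) list \<times> (nat \<times> nat) list"
type_synonym 'r elt = "word \<Rightarrow> 'r"

definition mono :: "word \<Rightarrow> 'r::comm_ring_1 elt" where
  "mono u = (\<lambda>w. if w = u then 1 else 0)"

definition azero :: "'r::comm_ring_1 elt" where "azero = (\<lambda>_. 0)"
definition aone :: "'r::comm_ring_1 elt" where "aone = mono ([], [])"
definition aadd :: "'r::comm_ring_1 elt \<Rightarrow> 'r elt \<Rightarrow> 'r elt" where
  "aadd f g = (\<lambda>w. f w + g w)"
definition asub :: "'r::comm_ring_1 elt \<Rightarrow> 'r elt \<Rightarrow> 'r elt" where
  "asub f g = (\<lambda>w. f w - g w)"
definition asmult :: "'r::comm_ring_1 \<Rightarrow> 'r elt \<Rightarrow> 'r elt" where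
  "asmult c f = (\<lambda>w. c * f w)"
definition asum :: "('a \<Rightarrow> 'r::comm_ring_1 elt) \<Rightarrow> 'a set \<Rightarrow> 'r elt" where
  "asum F S = (\<lambda>w. \<Sum>a\<in>S. F a w)"

definition amul :: "'r::comm_ring_1 elt \<Rightarrow> 'r elt \<Rightarrow> 'r elt" where
  "amul f g = (\<lambda>(a, b). \<Sum>i\<in>{0..length a}. \<Sum>j\<in>{0..length b}.
      f (take i a, take j b) * g (drop i a, drop j b))"

definition aprod :: "'r::comm_ring_1 elt list \<Rightarrow> 'r elt" where
  "aprod fs = foldr amul fs aone"

definition X :: "nat \<Rightarrow> nat \<Rightarrow> 'r::comm_ring_1 elt" where
  "X i j = mono ([(i, j)], [])"
definition Xs :: "nat \<Rightarrow> nat \<Rightarrow> 'r::comm_ring_1 elt" where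
  "Xs i j = mono ([], [(i, j)])"

inductive_set ideal_gen :: "'r::comm_ring_1 elt set \<Rightarrow> 'r elt set" for G where
  gen: "g \<in> G \<Longrightarrow> g \<in> ideal_gen G"
| zero: "azero \<in> ideal_gen G"
| add: "a \<in> ideal_gen G \<Longrightarrow> b \<in> ideal_gen G \<Longrightarrow> aadd a b \<in> ideal_gen G"
| mult: "a \<in> ideal_gen G \<Longrightarrow> asmult c (amul (amul (mono u) a) (mono v)) \<in> ideal_gen G"

text \<open>The four quantum-matrix relations for generators Y with parameter p
(p is q for x, q^{-1} for x*), pinv its inverse.\<close>
definition qmat_rels :: "nat \<Rightarrow> (nat \<Rightarrow> nat \<Rightarrow> 'r::comm_ring_1 elt) \<Rightarrow> 'r \<Rightarrow> 'r \<Rightarrow> 'r elt set" where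
  "qmat_rels n Y p pinv =
     {asub (amul (Y i k) (Y j k)) (asmult p (amul (Y j k) (Y i k))) | i j k.
        i \<in> {1..n} \<and> j \<in> {1..n} \<and> k \<in> {1..n} \<and> i < j}
   \<union> {asub (amul (Y k i) (Y k j)) (asmult p (amul (Y k j) (Y k i))) | i j k.
        i \<in> {1..n} \<and> j \<in> {1..n} \<and> k \<in> {1..n} \<and> i < j}
   \<union> {asub (amul (Y i j) (Y k l)) (amul (Y k l) (Y i j)) | i j k l.
        i \<in> {1..n} \<and> j \<in> {1..n} \<and> k \<in> {1..n} \<and> l \<in> {1..n} \<and> i < k \<and> j > l}
   \<union> {asub (asub (amul (Y i j) (Y k l)) (amul (Y k l) (Y i j)))
          (asmult (p - pinv) (amul (Y i l) (Y k j))) | i j k l.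
        i \<in> {1..n} \<and> j \<in> {1..n} \<and> k \<in> {1..n} \<and> l \<in> {1..n} \<and> i < k \<and> j < l}"

text \<open>q^{2k-2i} is written q^{2k} * qi^{2i}, qi being the inverse of q.\<close>
definition rels :: "nat \<Rightarrow> 'r::comm_ring_1 \<Rightarrow> 'r \<Rightarrow> 'r elt set" where
  "rels n q qi =
     qmat_rels n X q qi \<union> qmat_rels n Xs qi q
   \<union> {asum (\<lambda>k. amul (X i k) (Xs j k)) {1..n} | i j.
        i \<in> {1..n} \<and> j \<in> {1..n} \<and> i \<noteq> j}
   \<union> {asum (\<lambda>k. asmult (q ^ (2 * k)) (amul (X k i) (Xs k j))) {1..n} | i j.
        i \<in> {1..n} \<and> j \<in> {1..n} \<and> i \<noteq> j}
   \<union> {asub (asum (\<lambda>k. asmult (q ^ (2 * k) * qi ^ (2 * i)) (amul (X k i) (Xs k i))) {1..n})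
          (asum (\<lambda>k. amul (X j k) (Xs j k)) {1..n}) | i j.
        i \<in> {1..n} \<and> j \<in> {1..n}}"

definition qdet1 :: "nat \<Rightarrow> 'r::comm_ring_1 elt" where
  "qdet1 n = asum (\<lambda>l. amul (X 1 l) (Xs 1 l)) {1..n}"

text \<open>Congruence in A modulo the two-sided ideal of A generated by det_q^(1):
the difference lies in the ideal of the free algebra generated by the
defining relations of A together with det_q^(1).\<close>
definition cong_det1 :: "nat \<Rightarrow> 'r::comm_ring_1 \<Rightarrow> 'r \<Rightarrow> 'r elt \<Rightarrow> 'r elt \<Rightarrow> bool" where
  "cong_det1 n q qi a b \<longleftrightarrow> asub a b \<in> ideal_gen (rels n q qi \<union> {qdet1 n})"

definition perm_len :: "nat \<Rightarrow> (nat \<Rightarrow> nat) \<Rightarrow> nat" where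
  "perm_len k w = card {(a, b). a < b \<and> b < k \<and> w a > w b}"

definition list_inv :: "nat list \<Rightarrow> nat" where
  "list_inv is = card {(a, b). a < b \<and> b < length is \<and> is ! a > is ! b}"

definition sorted_minor :: "(nat \<Rightarrow> nat \<Rightarrow> 'r::comm_ring_1 elt) \<Rightarrow> 'r \<Rightarrow> nat list \<Rightarrow> nat list \<Rightarrow> 'r elt" where
  "sorted_minor Y p is js =
     asum (\<lambda>w. asmult ((- p) ^ perm_len (length is) w)
                 (aprod (map (\<lambda>t. Y (is ! w t) (js ! t)) [0..<length is])))
          {w. w permutes {0..<length is}}"

text \<open>General row indices: 0 if two coincide; otherwise each adjacent swap
of a descent gives a factor -p^{-1}, i.e. the factor (-p^{-1})^(number of
inversions) times the minor with sorted rows.\<close>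
definition gen_minor :: "(nat \<Rightarrow> nat \<Rightarrow> 'r::comm_ring_1 elt) \<Rightarrow> 'r \<Rightarrow> 'r \<Rightarrow> nat list \<Rightarrow> nat list \<Rightarrow> 'r elt" where
  "gen_minor Y p pinv is js =
     (if distinct is then asmult ((- pinv) ^ list_inv is) (sorted_minor Y p (sort is) js)
      else azero)"

definition rminor :: "'r::comm_ring_1 \<Rightarrow> 'r \<Rightarrow> nat list \<Rightarrow> nat list \<Rightarrow> 'r elt" where
  "rminor q qi is js = gen_minor X q qi is js"

definition rminor_star :: "'r::comm_ring_1 \<Rightarrow> 'r \<Rightarrow> nat list \<Rightarrow> nat list \<Rightarrow> 'r elt" where
  "rminor_star q qi is js = gen_minor Xs qi q is js"

end

theory Submission
  imports Defs "HOL-Library.Function_Algebras" "HOL-Combinatorics.Multiset_Permutations"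
begin

text \<open>
  Expanding both minors, every term is a monomial in which each column index l occurs once in a
  factor x_il and once in a factor x*_i'l. Modulo det_q^(1) the contraction \<Sum>_l x_il x*_i'l vanishes
  for all i, i', so letting one column index range over {j<..n} gives minus the same expression with
  that index ranging over {1..j}. To use this for all k indices at once, both sides are first written
  as sums over all k-tuples of column indices: by the quantum matrix relations the x-minor vanishes on
  repeated columns and picks up (-q^-1)^inv when its columns are sorted, and summing the x*-monomials
  over the permutations of a fixed set of columns gives back the x*-minor. This produces the sign
  (-1)^k. The power of q is immaterial: for k \<ge> 2, contracting the smallest column index once with
  the two smallest columns of the x-minor in either order, and noting that swapping them costs -q
  below and -q^-1 above the second smallest column, shows that q^2 - 1 annihilates the right-hand side
  modulo the ideal.
\<close>

section \<open>The free algebra\<close>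

text \<open>
  Elements carry the pointwise ring structure of Function_Algebras. Only its addition and the
  multiplication by constant functions scalar c are meaningful; the product of the algebra is amul.
\<close>

definition scalar :: "'r::comm_ring_1 \<Rightarrow> 'r elt" where "scalar c = (\<lambda>_. c)"

lemma scalar_apply[simp]: "scalar c w = c" by (simp add: scalar_def)
lemma scalar_mult: "scalar (a * b) = scalar a * scalar b" by (simp add: fun_eq_iff)
lemma scalar_add: "scalar (a + b) = scalar a + scalar b" by (simp add: fun_eq_iff)
lemma scalar_diff: "scalar (a - b) = scalar a - scalar b" by (simp add: fun_eq_iff)
lemma scalar_minus: "scalar (- a) = - scalar a" by (simp add: fun_eq_iff)
lemma scalar_one: "scalar 1 = 1" by (simp add: fun_eq_iff)
lemma power_fun_apply: "((f::'a \<Rightarrow> 'b::monoid_mult) ^ m) x = f x ^ m"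
  by (induct m) simp_all
lemma scalar_power: "scalar (a ^ m) = scalar a ^ m" by (simp add: fun_eq_iff power_fun_apply)

lemma sum_fun_apply: "(\<Sum>a\<in>S. F a) w = (\<Sum>a\<in>S. (F a w :: 'b::comm_monoid_add))"
  by (induct S rule: infinite_finite_induct) auto

lemma aadd_eq_plus: "aadd f g = f + g" by (simp add: aadd_def fun_eq_iff)
lemma asub_eq_minus: "asub f g = f - g" by (simp add: asub_def fun_eq_iff)
lemma asmult_eq_scalar: "asmult c f = scalar c * f" by (simp add: asmult_def fun_eq_iff)
lemma asum_eq_sum: "asum F S = (\<Sum>a\<in>S. F a)" by (simp add: asum_def fun_eq_iff sum_fun_apply)
lemma azero_eq_0: "azero = 0" by (simp add: azero_def fun_eq_iff)

lemma mono_apply: "mono u w = (if w = u then 1 else 0)" by (simp add: mono_def)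

lemma amul_apply: "amul f g (x, y) = (\<Sum>i\<in>{0..length x}. \<Sum>j\<in>{0..length y}.
      f (take i x, take j y) * g (drop i x, drop j y))"
  by (simp add: amul_def)

lemma amul_add_left: "amul (f + g) h = amul f h + amul g h"
  by (auto simp: fun_eq_iff amul_apply sum.distrib algebra_simps)
lemma amul_add_right: "amul f (g + h) = amul f g + amul f h"
  by (auto simp: fun_eq_iff amul_apply sum.distrib algebra_simps)
lemma amul_diff_left: "amul (f - g) h = amul f h - amul g h"
  by (auto simp: fun_eq_iff amul_apply sum_subtractf algebra_simps)
lemma amul_diff_right: "amul f (g - h) = amul f g - amul f h"
  by (auto simp: fun_eq_iff amul_apply sum_subtractf algebra_simps)
lemma amul_scalar_left: "amul (scalar c * f) h = scalar c * amul f h"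
  by (auto simp: fun_eq_iff amul_apply sum_distrib_left algebra_simps)
lemma amul_scalar_right: "amul f (scalar c * h) = scalar c * amul f h"
  by (auto simp: fun_eq_iff amul_apply sum_distrib_left algebra_simps)
lemma amul_zero_left: "amul 0 h = 0"
  by (auto simp: fun_eq_iff amul_apply)
lemma amul_zero_right: "amul f 0 = 0"
  by (auto simp: fun_eq_iff amul_apply)
lemma amul_sum_left: "amul (\<Sum>a\<in>S. F a) h = (\<Sum>a\<in>S. amul (F a) h)"
proof (induct S rule: infinite_finite_induct)
  case (insert x S)
  show ?case by (simp only: sum.insert[OF insert(1,2)] amul_add_left insert(3))
qed (simp_all only: sum.infinite sum.empty amul_zero_left not_False_eq_True)
lemma amul_sum_right: "amul h (\<Sum>a\<in>S. F a) = (\<Sum>a\<in>S. amul h (F a))"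
proof (induct S rule: infinite_finite_induct)
  case (insert x S)
  show ?case by (simp only: sum.insert[OF insert(1,2)] amul_add_right insert(3))
qed (simp_all only: sum.infinite sum.empty amul_zero_right not_False_eq_True)

lemma sum_take_eq_delta:
  "(\<Sum>i\<in>{0..length x}. if take i x = a then g i else 0) =
    (if take (length a) x = a then g (length a) else (0::'b::comm_monoid_add))"
proof -
  have "(\<Sum>i\<in>{0..length x}. if take i x = a then g i else 0) =
      (\<Sum>i\<in>{0..length x}. if i = length a then (if take (length a) x = a then g i else 0) else 0)"
    by (rule sum.cong) (auto dest: arg_cong[of _ _ length])
  then show ?thesis by (auto simp: sum.delta' dest: arg_cong[of _ _ length])
qed

lemma amul_mono_left_apply:
  "amul (mono (a, b)) h (x, y) =
    (if take (length a) x = a \<and> take (length b) y = b then h (drop (length a) x, drop (length b) y) else 0)"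
proof -
  have "amul (mono (a, b)) h (x, y) = (\<Sum>i\<in>{0..length x}. if take i x = a then
      (\<Sum>j\<in>{0..length y}. if take j y = b then h (drop i x, drop j y) else 0) else 0)"
    unfolding amul_apply mono_apply
  proof (rule sum.cong[OF refl])
    fix i
    show "(\<Sum>j\<in>{0..length y}. (if (take i x, take j y) = (a, b) then 1 else 0) * h (drop i x, drop j y)) =
      (if take i x = a then (\<Sum>j\<in>{0..length y}. if take j y = b then h (drop i x, drop j y) else 0) else 0)"
      by (cases "take i x = a") (auto intro!: sum.cong)
  qed
  then show ?thesis by (simp add: sum_take_eq_delta)
qed

lemma amul_mono_mono: "amul (mono (a, b) :: 'r::comm_ring_1 elt) (mono (c, d)) = mono (a @ c, b @ d)"
  by (rule ext, clarify)
    (simp add: amul_mono_left_apply mono_apply eq_commute[of _ "_ @ _"] append_eq_conv_conj conj_commute)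

lemma amul_one_left: "amul (mono ([], [])) f = f"
  by (rule ext, clarify) (simp add: amul_mono_left_apply)

lemma amul_one_right: "amul f (mono ([], [])) = f"
proof (rule ext, clarify)
  fix x y
  have "amul f (mono ([], [])) (x, y) = (\<Sum>i\<in>{0..length x}. if i = length x then
      (\<Sum>j\<in>{0..length y}. if j = length y then f (x, y) else 0) else 0)"
    unfolding amul_apply mono_apply
  proof (rule sum.cong[OF refl])
    fix i assume "i \<in> {0..length x}"
    then show "(\<Sum>j\<in>{0..length y}. f (take i x, take j y) * (if (drop i x, drop j y) = ([], []) then 1 else 0)) =
      (if i = length x then (\<Sum>j\<in>{0..length y}. if j = length y then f (x, y) else 0) else 0)"
      by (cases "i = length x") (auto intro!: sum.cong simp del: sum.delta sum.delta')
  qed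
  then show "amul f (mono ([], [])) (x, y) = f (x, y)" by (simp add: sum.delta')
qed

lemma take_append_iff:
  "take (length a + length c) x = a @ c \<longleftrightarrow> take (length a) x = a \<and> take (length c) (drop (length a) x) = c"
proof -
  have "take (length a + length c) x = take (length a) x @ take (length c) (drop (length a) x)"
    by (simp add: take_add)
  show ?thesis
  proof (cases "length a \<le> length x")
    case True
    then have "length (take (length a) x) = length a" by simp
    then show ?thesis using \<open>take (length a + length c) x = _\<close> by auto
  next
    case False
    then have "take (length a) x \<noteq> a" by (auto dest: arg_cong[of _ _ length])
    moreover have "take (length a + length c) x \<noteq> a @ c" using False by (auto dest: arg_cong[of _ _ length])
    ultimately show ?thesis by simp
  qed
qed

lemma amul_mono_assoc:
  "amul (mono u) (amul (mono v) h) = amul (amul (mono u) (mono v)) (h :: 'r::comm_ring_1 elt)"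
proof -
  obtain a b where u: "u = (a, b)" by force
  obtain c d where v: "v = (c, d)" by force
  show ?thesis unfolding u v amul_mono_mono
    by (rule ext, clarify) (simp add: amul_mono_left_apply take_append_iff drop_drop add.commute)
qed

text \<open>
  ideal_gen is closed only under multiplication by monomials; finitely supported elements are
  finite linear combinations of these.
\<close>

definition fin_supp :: "'r::comm_ring_1 elt \<Rightarrow> bool" where "fin_supp f \<longleftrightarrow> finite {w. f w \<noteq> 0}"

lemma fin_supp_mono[simp]: "fin_supp (mono u)"
proof -
  have "{w. mono u w \<noteq> (0::'a)} \<subseteq> {u}" by (auto simp: mono_apply split: if_splits)
  then show ?thesis unfolding fin_supp_def using finite_subset by blast
qed
lemma fin_supp_zero[simp]: "fin_supp 0" by (simp add: fin_supp_def)
lemma fin_supp_add[simp]: "fin_supp f \<Longrightarrow> fin_supp g \<Longrightarrow> fin_supp (f + g)"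
  unfolding fin_supp_def by (rule finite_subset[of _ "{w. f w \<noteq> 0} \<union> {w. g w \<noteq> 0}"]) auto
lemma fin_supp_scalar[simp]: "fin_supp f \<Longrightarrow> fin_supp (scalar c * f)"
  unfolding fin_supp_def by (rule finite_subset[of _ "{w. f w \<noteq> 0}"]) auto
lemma fin_supp_sum: assumes "\<And>a. a \<in> S \<Longrightarrow> fin_supp (F a)" shows "fin_supp (\<Sum>a\<in>S. F a)"
proof (cases "finite S")
  case False then show ?thesis by simp
next
  case True then show ?thesis using assms by (induct S rule: finite_induct) auto
qed

lemma fin_supp_eq_sum_mono:
  assumes "fin_supp f"
  shows "f = (\<Sum>w\<in>{w. f w \<noteq> 0}. scalar (f w) * mono w)"
proof (rule ext)
  fix z
  have fin: "finite {w. f w \<noteq> 0}" using assms by (simp add: fin_supp_def)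
  have "(\<Sum>w\<in>{w. f w \<noteq> 0}. scalar (f w) * mono w) z = (\<Sum>w\<in>{w. f w \<noteq> 0}. if w = z then f w else 0)"
    by (rule trans[OF sum_fun_apply], rule sum.cong) (auto simp: mono_apply)
  also have "\<dots> = f z" using fin by (simp add: sum.delta)
  finally show "f z = (\<Sum>w\<in>{w. f w \<noteq> 0}. scalar (f w) * mono w) z" by simp
qed

section \<open>The two-sided ideal generated by a set\<close>

lemma ideal_gen_0: "0 \<in> ideal_gen G" using ideal_gen.zero[of G] by (simp add: azero_eq_0)
lemma ideal_gen_add: "a \<in> ideal_gen G \<Longrightarrow> b \<in> ideal_gen G \<Longrightarrow> a + b \<in> ideal_gen G"
  using ideal_gen.add[of a G b] by (simp add: aadd_eq_plus)
lemma ideal_gen_mult_scalar: "a \<in> ideal_gen G \<Longrightarrow> scalar c * amul (amul (mono u) a) (mono v) \<in> ideal_gen G"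
  using ideal_gen.mult[of a G c u v] by (simp add: asmult_eq_scalar)
lemma ideal_gen_scalar: "a \<in> ideal_gen G \<Longrightarrow> scalar c * a \<in> ideal_gen G"
  using ideal_gen_mult_scalar[of a G c "([],[])" "([],[])"] by (simp add: amul_one_left amul_one_right)
lemma ideal_gen_amul_mono_left: "a \<in> ideal_gen G \<Longrightarrow> amul (mono u) a \<in> ideal_gen G"
  using ideal_gen_mult_scalar[of a G 1 u "([],[])"] by (simp add: amul_one_right scalar_one)
lemma ideal_gen_amul_mono_right: "a \<in> ideal_gen G \<Longrightarrow> amul a (mono v) \<in> ideal_gen G"
  using ideal_gen_mult_scalar[of a G 1 "([],[])" v] by (simp add: amul_one_left scalar_one)
lemma ideal_gen_uminus: "a \<in> ideal_gen G \<Longrightarrow> - a \<in> ideal_gen G"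
  using ideal_gen_scalar[of a G "-1"] by (simp add: scalar_minus scalar_one)
lemma ideal_gen_diff: "a \<in> ideal_gen G \<Longrightarrow> b \<in> ideal_gen G \<Longrightarrow> a - b \<in> ideal_gen G"
  using ideal_gen_add[of a G "- b"] ideal_gen_uminus[of b G] by simp
lemma ideal_gen_sum: assumes "\<And>a. a \<in> S \<Longrightarrow> F a \<in> ideal_gen G" shows "(\<Sum>a\<in>S. F a) \<in> ideal_gen G"
proof (cases "finite S")
  case False then show ?thesis by (simp add: ideal_gen_0)
next
  case True then show ?thesis using assms by (induct S rule: finite_induct) (auto simp: ideal_gen_0 ideal_gen_add)
qed
lemma ideal_gen_amul_left: assumes "fin_supp g" "a \<in> ideal_gen G" shows "amul g a \<in> ideal_gen G"
proof -
  have "amul g a = (\<Sum>w\<in>{w. g w \<noteq> 0}. scalar (g w) * amul (mono w) a)"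
    by (subst fin_supp_eq_sum_mono[OF assms(1)]) (simp add: amul_sum_left amul_scalar_left)
  also have "\<dots> \<in> ideal_gen G" by (intro ideal_gen_sum ideal_gen_scalar ideal_gen_amul_mono_left assms(2))
  finally show ?thesis .
qed
lemma ideal_gen_amul_right: assumes "fin_supp g" "a \<in> ideal_gen G" shows "amul a g \<in> ideal_gen G"
proof -
  have "amul a g = (\<Sum>w\<in>{w. g w \<noteq> 0}. scalar (g w) * amul a (mono w))"
    by (subst fin_supp_eq_sum_mono[OF assms(1)]) (simp add: amul_sum_right amul_scalar_right)
  also have "\<dots> \<in> ideal_gen G" by (intro ideal_gen_sum ideal_gen_scalar ideal_gen_amul_mono_right assms(2))
  finally show ?thesis .
qed

definition cong_ideal :: "'r::comm_ring_1 elt set \<Rightarrow> 'r elt \<Rightarrow> 'r elt \<Rightarrow> bool" where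
  "cong_ideal G f g \<longleftrightarrow> f - g \<in> ideal_gen G"

lemma cong_ideal_refl[simp]: "cong_ideal G f f" by (simp add: cong_ideal_def ideal_gen_0)
lemma cong_ideal_sym: "cong_ideal G f g \<Longrightarrow> cong_ideal G g f"
  unfolding cong_ideal_def using ideal_gen_uminus by fastforce
lemma cong_ideal_trans: "cong_ideal G f g \<Longrightarrow> cong_ideal G g h \<Longrightarrow> cong_ideal G f h"
  unfolding cong_ideal_def using ideal_gen_add by fastforce
lemmas [trans] = cong_ideal_trans

lemma cong_ideal_add: "cong_ideal G f g \<Longrightarrow> cong_ideal G f' g' \<Longrightarrow> cong_ideal G (f + f') (g + g')"
  unfolding cong_ideal_def using ideal_gen_add by (fastforce simp: algebra_simps)
lemma cong_ideal_scalar: "cong_ideal G f g \<Longrightarrow> cong_ideal G (scalar c * f) (scalar c * g)"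
  unfolding cong_ideal_def using ideal_gen_scalar by (fastforce simp: algebra_simps)
lemma cong_ideal_sum: "(\<And>a. a \<in> S \<Longrightarrow> cong_ideal G (F a) (F' a)) \<Longrightarrow> cong_ideal G (\<Sum>a\<in>S. F a) (\<Sum>a\<in>S. F' a)"
  unfolding cong_ideal_def by (simp add: sum_subtractf[symmetric] ideal_gen_sum)
lemma cong_ideal_amul_left: "fin_supp h \<Longrightarrow> cong_ideal G f g \<Longrightarrow> cong_ideal G (amul h f) (amul h g)"
  unfolding cong_ideal_def by (simp add: amul_diff_right[symmetric] ideal_gen_amul_left)
lemma cong_ideal_amul_right: "fin_supp h \<Longrightarrow> cong_ideal G f g \<Longrightarrow> cong_ideal G (amul f h) (amul g h)"
  unfolding cong_ideal_def by (simp add: amul_diff_left[symmetric] ideal_gen_amul_right)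
lemma cong_ideal_gen: "f - g \<in> G \<Longrightarrow> cong_ideal G f g" by (simp add: cong_ideal_def ideal_gen.gen)

section \<open>Quantum minors\<close>

definition monomial_gens :: "(nat \<Rightarrow> nat \<Rightarrow> 'r::comm_ring_1 elt) \<Rightarrow> bool" where
  "monomial_gens Y \<longleftrightarrow> (\<forall>a b. \<exists>u. Y a b = mono u)"

lemma monomial_gens_X: "monomial_gens X" by (auto simp: monomial_gens_def X_def)
lemma monomial_gens_Xs: "monomial_gens Xs" by (auto simp: monomial_gens_def Xs_def)

definition gen_prod :: "(nat \<Rightarrow> nat \<Rightarrow> 'r::comm_ring_1 elt) \<Rightarrow> nat list \<Rightarrow> nat list \<Rightarrow> 'r elt" where
  "gen_prod Y R C = aprod (map (\<lambda>(a, b). Y a b) (zip R C))"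

lemma gen_prod_Nil: "gen_prod Y [] C = mono ([], [])" by (simp add: gen_prod_def aprod_def aone_def)
lemma gen_prod_Nil2: "gen_prod Y R [] = mono ([], [])" by (simp add: gen_prod_def aprod_def aone_def)
lemma gen_prod_Cons: "gen_prod Y (a # R) (c # C) = amul (Y a c) (gen_prod Y R C)"
  by (simp add: gen_prod_def aprod_def)

lemma gen_prod_monomial: assumes "monomial_gens Y" shows "\<exists>u. gen_prod Y R C = mono u"
proof (induct R arbitrary: C)
  case Nil then show ?case by (auto simp: gen_prod_Nil)
next
  case (Cons a R)
  show ?case
  proof (cases C)
    case Nil then show ?thesis by (auto simp: gen_prod_Nil2)
  next
    case (Cons c C')
    obtain u1 u2 where u: "Y a c = mono (u1, u2)" using assms unfolding monomial_gens_def by (metis surj_pair)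
    obtain v1 v2 where v: "gen_prod Y R C' = mono (v1, v2)" using Cons.hyps by (metis surj_pair)
    show ?thesis unfolding Cons gen_prod_Cons u v amul_mono_mono by blast
  qed
qed

lemma fin_supp_gen_prod: "monomial_gens Y \<Longrightarrow> fin_supp (gen_prod Y R C)"
  using gen_prod_monomial[of Y R C] by auto
lemma fin_supp_gen: "monomial_gens Y \<Longrightarrow> fin_supp (Y a b)"
  unfolding monomial_gens_def by (metis fin_supp_mono)

lemma amul_gen_assoc: "monomial_gens Y \<Longrightarrow> amul (Y a b) (amul (Y c d) h) = amul (amul (Y a b) (Y c d)) h"
  unfolding monomial_gens_def by (metis amul_mono_assoc)

definition rank_in :: "nat set \<Rightarrow> nat \<Rightarrow> nat" where "rank_in A a = card {x\<in>A. x < a}"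

lemma list_inv_Cons: "list_inv (c # L) = length (filter (\<lambda>x. x < c) L) + list_inv L"
proof -
  let ?P = "{i. i < length L \<and> L ! i < c}"
  let ?Q = "{(a, b). a < b \<and> b < length L \<and> L ! a > L ! b}"
  let ?S = "{(a, b). a < b \<and> b < length (c # L) \<and> (c # L) ! a > (c # L) ! b}"
  have eq: "?S = (\<lambda>i. (0::nat, Suc i)) ` ?P \<union> (\<lambda>(a, b). (Suc a, Suc b)) ` ?Q"
  proof (rule set_eqI)
    fix z :: "nat \<times> nat"
    obtain a b where z: "z = (a, b)" by force
    show "z \<in> ?S \<longleftrightarrow> z \<in> (\<lambda>i. (0::nat, Suc i)) ` ?P \<union> (\<lambda>(a, b). (Suc a, Suc b)) ` ?Q"
      unfolding z
    proof (cases a)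
      case 0 then show "(a, b) \<in> ?S \<longleftrightarrow> (a, b) \<in> (\<lambda>i. (0::nat, Suc i)) ` ?P \<union> (\<lambda>(a, b). (Suc a, Suc b)) ` ?Q"
        by (cases b) (auto simp: image_iff)
    next
      case (Suc a') then show "(a, b) \<in> ?S \<longleftrightarrow> (a, b) \<in> (\<lambda>i. (0::nat, Suc i)) ` ?P \<union> (\<lambda>(a, b). (Suc a, Suc b)) ` ?Q"
        by (cases b) (auto simp: image_iff)
    qed
  qed
  have f1: "finite ?P" by simp
  have f2: "finite ?Q" by (rule finite_subset[of _ "{..<length L} \<times> {..<length L}"]) auto
  have "card ?S = card ((\<lambda>i. (0::nat, Suc i)) ` ?P) + card ((\<lambda>(a, b). (Suc a, Suc b)) ` ?Q)"
    unfolding eq by (rule card_Un_disjoint[OF finite_imageI[OF f1] finite_imageI[OF f2]]) auto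
  also have "\<dots> = card ?P + card ?Q"
    by (subst card_image, simp add: inj_on_def, subst card_image) (auto simp: inj_on_def)
  finally show ?thesis unfolding list_inv_def length_filter_conv_card by simp
qed

lemma length_filter_less_rank_in:
  assumes "finite A" "a \<in> A" "R \<in> permutations_of_set (A - {a})"
  shows "length (filter (\<lambda>x. x < a) R) = rank_in A a"
proof -
  have d: "distinct R" and s: "set R = A - {a}" using assms(3) by (auto simp: permutations_of_set_def)
  have "length (filter (\<lambda>x. x < a) R) = card ({x. x < a} \<inter> set R)"
    using d by (simp add: distinct_length_filter)
  also have "{x. x < a} \<inter> set R = {x\<in>A. x < a}" using s by auto
  finally show ?thesis by (simp add: rank_in_def)
qed

text \<open>
  qminor Y p A C is the right quantum minor with the rows of A in increasing order and columns C,
  expanded as a sum over the orderings of A; qminor_col expands over the orderings of a column set.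
\<close>

definition qminor :: "(nat \<Rightarrow> nat \<Rightarrow> 'r::comm_ring_1 elt) \<Rightarrow> 'r \<Rightarrow> nat set \<Rightarrow> nat list \<Rightarrow> 'r elt" where
  "qminor Y p A C = (\<Sum>R\<in>permutations_of_set A. scalar ((- p) ^ list_inv R) * gen_prod Y R C)"

definition qminor_col :: "(nat \<Rightarrow> nat \<Rightarrow> 'r::comm_ring_1 elt) \<Rightarrow> 'r \<Rightarrow> nat list \<Rightarrow> nat set \<Rightarrow> 'r elt" where
  "qminor_col Y p I B = (\<Sum>L\<in>permutations_of_set B. scalar ((- p) ^ list_inv L) * gen_prod Y I L)"

lemma fin_supp_qminor: "monomial_gens Y \<Longrightarrow> fin_supp (qminor Y p A C)"
  unfolding qminor_def by (intro fin_supp_sum fin_supp_scalar fin_supp_gen_prod)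

lemma qminor_Nil: "qminor Y p {} [] = mono ([], [])"
  by (simp add: qminor_def list_inv_def gen_prod_Nil scalar_one)
lemma qminor_col_Nil: "qminor_col Y p [] {} = mono ([], [])"
  by (simp add: qminor_col_def list_inv_def gen_prod_Nil scalar_one)

lemma sum_permutations_of_set_Cons:
  assumes "finite A" "A \<noteq> {}"
  shows "(\<Sum>R\<in>permutations_of_set A. f R) = (\<Sum>a\<in>A. \<Sum>R\<in>permutations_of_set (A - {a}). f (a # R))"
proof -
  have "(\<Sum>R\<in>permutations_of_set A. f R) = (\<Sum>R\<in>(\<Union>a\<in>A. (#) a ` permutations_of_set (A - {a})). f R)"
    using permutations_of_set_nonempty[OF assms(2)] by simp
  also have "\<dots> = (\<Sum>a\<in>A. \<Sum>R\<in>(#) a ` permutations_of_set (A - {a}). f R)"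
    by (rule sum.UNION_disjoint) (auto simp: assms)
  also have "\<dots> = (\<Sum>a\<in>A. \<Sum>R\<in>permutations_of_set (A - {a}). f (a # R))"
    by (rule sum.cong[OF refl], subst sum.reindex) (auto simp: inj_on_def)
  finally show ?thesis .
qed

lemma qminor_Cons:
  assumes "finite A" "A \<noteq> {}"
  shows "qminor Y p A (c # C) = (\<Sum>a\<in>A. scalar ((- p) ^ rank_in A a) * amul (Y a c) (qminor Y p (A - {a}) C))"
  unfolding qminor_def sum_permutations_of_set_Cons[OF assms]
  by (rule sum.cong[OF refl]) (simp add: list_inv_Cons length_filter_less_rank_in[OF assms(1)] power_add
      scalar_mult amul_sum_right amul_scalar_right sum_distrib_left mult.assoc gen_prod_Cons cong: sum.cong)

lemma qminor_col_Cons: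
  assumes "finite B" "B \<noteq> {}"
  shows "qminor_col Y p (i # I) B = (\<Sum>b\<in>B. scalar ((- p) ^ rank_in B b) * amul (Y i b) (qminor_col Y p I (B - {b})))"
  unfolding qminor_col_def sum_permutations_of_set_Cons[OF assms]
  by (rule sum.cong[OF refl]) (simp add: list_inv_Cons length_filter_less_rank_in[OF assms(1)] power_add
      scalar_mult amul_sum_right amul_scalar_right sum_distrib_left mult.assoc gen_prod_Cons cong: sum.cong)

lemma sorted_wrt_less_nth_less_iff:
  fixes I :: "nat list"
  assumes "sorted_wrt (<) I" "x < length I" "y < length I"
  shows "(I ! x < I ! y) = (x < y)"
  using sorted_wrt_nth_less[OF assms(1)] assms(2,3) by (metis linorder_neqE_nat order_less_asym)

lemma bij_betw_permutes_permutations_of_set: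
  assumes dI: "distinct I"
  shows "bij_betw (\<lambda>w. map (\<lambda>t. I ! w t) [0..<length I]) {w. w permutes {0..<length I}}
    (permutations_of_set (set I))"
proof -
  let ?k = "length I" and ?S = "{w. w permutes {0..<length I}}"
  let ?\<phi> = "\<lambda>w. map (\<lambda>t. I ! w t) [0..<?k]"
  have wk: "w t < ?k" if "w \<in> ?S" "t < ?k" for w t
    using that permutes_in_image by fastforce
  have inj: "inj_on ?\<phi> ?S"
  proof (rule inj_onI, rule ext)
    fix w1 w2 t assume w1: "w1 \<in> ?S" and w2: "w2 \<in> ?S" and e: "?\<phi> w1 = ?\<phi> w2"
    show "w1 t = w2 t"
    proof (cases "t < ?k")
      case True
      then have "I ! w1 t = I ! w2 t" using arg_cong[OF e, of "\<lambda>xs. xs ! t"] by simp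
      then show ?thesis using nth_eq_iff_index_eq[OF dI] wk[OF w1 True] wk[OF w2 True] by simp
    qed (use w1 w2 in \<open>simp add: permutes_not_in\<close>)
  qed
  have img: "?\<phi> ` ?S \<subseteq> permutations_of_set (set I)"
  proof (rule image_subsetI)
    fix w assume w: "w \<in> ?S"
    then have pw: "w permutes {0..<?k}" by simp
    have "inj_on (\<lambda>t. I ! w t) {0..<?k}"
    proof (rule inj_onI)
      fix x y assume "x \<in> {0..<?k}" "y \<in> {0..<?k}" "I ! w x = I ! w y"
      then have "w x = w y" using nth_eq_iff_index_eq[OF dI] wk[OF w] by simp
      then show "x = y" using permutes_inj[OF pw] by (simp add: inj_eq)
    qed
    moreover have "(\<lambda>t. I ! t) ` (w ` {0..<?k}) = set I"
      unfolding permutes_image[OF pw] by (auto simp: in_set_conv_nth)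
    ultimately show "?\<phi> w \<in> permutations_of_set (set I)"
      by (auto simp: permutations_of_set_def distinct_map image_image)
  qed
  have "card ?S = fact ?k" by (rule card_permutations) simp_all
  moreover have "card (permutations_of_set (set I)) = fact ?k" using dI by (simp add: distinct_card)
  ultimately have "?\<phi> ` ?S = permutations_of_set (set I)"
    by (intro card_subset_eq[OF finite_permutations_of_set img]) (simp add: card_image[OF inj])
  then show ?thesis using inj by (simp add: bij_betw_def)
qed

lemma list_inv_map_nth_permutes:
  assumes sI: "sorted_wrt (<) I" and w: "w permutes {0..<length I}"
  shows "list_inv (map (\<lambda>t. I ! w t) [0..<length I]) = perm_len (length I) w"
  unfolding list_inv_def perm_len_def
proof (rule arg_cong[where f=card], rule set_eqI, clarify)
  fix a b
  have "w t < length I" if "t < length I" for t using that permutes_in_image[OF w] by simp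
  then show "(a, b) \<in> {(a, b). a < b \<and> b < length (map (\<lambda>t. I ! w t) [0..<length I]) \<and>
      map (\<lambda>t. I ! w t) [0..<length I] ! b < map (\<lambda>t. I ! w t) [0..<length I] ! a} \<longleftrightarrow>
    (a, b) \<in> {(a, b). a < b \<and> b < length I \<and> w b < w a}"
    using sorted_wrt_less_nth_less_iff[OF sI] by auto
qed

lemma sorted_minor_eq_qminor:
  assumes sI: "sorted_wrt (<) I" and lC: "length C = length I"
  shows "sorted_minor Y p I C = qminor Y p (set I) C"
proof -
  let ?\<phi> = "\<lambda>w. map (\<lambda>t. I ! w t) [0..<length I]"
  have bij: "bij_betw ?\<phi> {w. w permutes {0..<length I}} (permutations_of_set (set I))"
    using sI by (intro bij_betw_permutes_permutations_of_set) (simp add: strict_sorted_iff)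
  have "gen_prod Y (?\<phi> w) C = aprod (map (\<lambda>t. Y (I ! w t) (C ! t)) [0..<length I])" for w
    unfolding gen_prod_def by (rule arg_cong[where f=aprod], rule nth_equalityI) (simp_all add: lC)
  then show ?thesis
    unfolding qminor_def sum.reindex_bij_betw[OF bij, symmetric] sorted_minor_def asum_eq_sum asmult_eq_scalar
    by (intro sum.cong refl) (simp add: list_inv_map_nth_permutes[OF sI])
qed

lemma rminor_eq_qminor:
  "distinct r \<Longrightarrow> length C = length r \<Longrightarrow> rminor q qi r C = scalar ((- qi) ^ list_inv r) * qminor X q (set r) C"
  unfolding rminor_def gen_minor_def
  by (simp add: asmult_eq_scalar sorted_minor_eq_qminor strict_sorted_iff)

lemma rminor_star_eq_qminor:
  "distinct s \<Longrightarrow> length C = length s \<Longrightarrow> rminor_star q qi s C = scalar ((- q) ^ list_inv s) * qminor Xs qi (set s) C"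
  unfolding rminor_star_def gen_minor_def
  by (simp add: asmult_eq_scalar sorted_minor_eq_qminor strict_sorted_iff)

lemma rminor_not_distinct: "\<not> distinct r \<Longrightarrow> rminor q qi r C = 0"
  unfolding rminor_def gen_minor_def by (simp add: azero_eq_0)
lemma rminor_star_not_distinct: "\<not> distinct s \<Longrightarrow> rminor_star q qi s C = 0"
  unfolding rminor_star_def gen_minor_def by (simp add: azero_eq_0)

section \<open>Consequences of the quantum matrix relations\<close>

lemma qmat_rel_same_col:
  assumes "qmat_rels n Y p pinv \<subseteq> G" "i < j" "i \<in> {1..n}" "j \<in> {1..n}" "k \<in> {1..n}"
  shows "amul (Y i k) (Y j k) - scalar p * amul (Y j k) (Y i k) \<in> G"
proof -
  have "asub (amul (Y i k) (Y j k)) (asmult p (amul (Y j k) (Y i k))) \<in> qmat_rels n Y p pinv"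
    unfolding qmat_rels_def using assms(2-5) by blast
  then show ?thesis using assms(1) by (auto simp: asub_eq_minus asmult_eq_scalar)
qed

lemma qmat_rel_commute:
  assumes "qmat_rels n Y p pinv \<subseteq> G" "i < k" "j > l" "i \<in> {1..n}" "j \<in> {1..n}" "k \<in> {1..n}" "l \<in> {1..n}"
  shows "amul (Y i j) (Y k l) - amul (Y k l) (Y i j) \<in> G"
proof -
  have "asub (amul (Y i j) (Y k l)) (amul (Y k l) (Y i j)) \<in> qmat_rels n Y p pinv"
    unfolding qmat_rels_def using assms(2-7) by blast
  then show ?thesis using assms(1) by (auto simp: asub_eq_minus asmult_eq_scalar)
qed

lemma qmat_rel_cross:
  assumes "qmat_rels n Y p pinv \<subseteq> G" "i < k" "j < l" "i \<in> {1..n}" "j \<in> {1..n}" "k \<in> {1..n}" "l \<in> {1..n}"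
  shows "(amul (Y i j) (Y k l) - amul (Y k l) (Y i j)) - scalar (p - pinv) * amul (Y i l) (Y k j) \<in> G"
proof -
  have "asub (asub (amul (Y i j) (Y k l)) (amul (Y k l) (Y i j)))
          (asmult (p - pinv) (amul (Y i l) (Y k j))) \<in> qmat_rels n Y p pinv"
    unfolding qmat_rels_def using assms(2-7) by blast
  then show ?thesis using assms(1) by (auto simp: asub_eq_minus asmult_eq_scalar)
qed

definition qminor2 :: "(nat \<Rightarrow> nat \<Rightarrow> 'r::comm_ring_1 elt) \<Rightarrow> 'r \<Rightarrow> nat \<Rightarrow> nat \<Rightarrow> nat \<Rightarrow> nat \<Rightarrow> 'r elt" where
  "qminor2 Y p a b c d = amul (Y a c) (Y b d) - scalar p * amul (Y b c) (Y a d)"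

lemma qminor2_same_col_in_ideal:
  assumes "qmat_rels n Y p pinv \<subseteq> G" "a < b" "a \<in> {1..n}" "b \<in> {1..n}" "c \<in> {1..n}"
  shows "qminor2 Y p a b c c \<in> ideal_gen G"
  unfolding qminor2_def by (rule ideal_gen.gen, rule qmat_rel_same_col[OF assms])

lemma qminor2_swap_cols:
  assumes "qmat_rels n Y p pinv \<subseteq> G" "p * pinv = 1" "a < b" "d < c"
    "a \<in> {1..n}" "b \<in> {1..n}" "c \<in> {1..n}" "d \<in> {1..n}"
  shows "cong_ideal G (qminor2 Y p a b c d) (scalar (- p) * qminor2 Y p a b d c)"
proof -
  define u where "u = amul (Y a c) (Y b d)"
  define v where "v = amul (Y b d) (Y a c)"
  define w where "w = amul (Y a d) (Y b c)"
  define z where "z = amul (Y b c) (Y a d)"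
  have r3: "u - v \<in> G" unfolding u_def v_def by (rule qmat_rel_commute[OF assms(1,3,4,5,7,6,8)])
  have r4: "(w - z) - scalar (p - pinv) * u \<in> G" unfolding u_def w_def z_def
    by (rule qmat_rel_cross[OF assms(1,3,4,5,8,6,7)])
  have pp: "scalar p * scalar pinv = (1 :: 'a elt)" using assms(2) by (simp add: scalar_mult[symmetric] scalar_one)
  have "qminor2 Y p a b c d - scalar (- p) * qminor2 Y p a b d c =
      scalar p ^ 2 * (u - v) + scalar p * ((w - z) - scalar (p - pinv) * u) + (1 - scalar p * scalar pinv) * u"
    unfolding qminor2_def u_def[symmetric] v_def[symmetric] w_def[symmetric] z_def[symmetric]
    by (simp add: scalar_diff scalar_minus algebra_simps power2_eq_square)
  also have "\<dots> = scalar (p ^ 2) * (u - v) + scalar p * ((w - z) - scalar (p - pinv) * u)"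
    by (simp add: pp scalar_power)
  also have "\<dots> \<in> ideal_gen G" by (intro ideal_gen_add ideal_gen_scalar ideal_gen.gen r3 r4)
  finally show ?thesis unfolding cong_ideal_def .
qed

lemma sum_distinct_pairs:
  assumes "finite (A::nat set)"
  shows "(\<Sum>a\<in>A. \<Sum>b\<in>A - {a}. T a b) = (\<Sum>a\<in>A. \<Sum>b\<in>{b\<in>A. a < b}. T a b + T b a)"
proof -
  have "(\<Sum>a\<in>A. \<Sum>b\<in>A - {a}. T a b) = (\<Sum>a\<in>A. (\<Sum>b\<in>{b\<in>A. a < b}. T a b) + (\<Sum>b\<in>{b\<in>A. b < a}. T a b))"
  proof (rule sum.cong[OF refl])
    fix a
    have e: "A - {a} = {b\<in>A. a < b} \<union> {b\<in>A. b < a}" by auto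
    have "(\<Sum>b\<in>A - {a}. T a b) = (\<Sum>b\<in>{b\<in>A. a < b} \<union> {b\<in>A. b < a}. T a b)" by (simp only: e)
    also have "\<dots> = (\<Sum>b\<in>{b\<in>A. a < b}. T a b) + (\<Sum>b\<in>{b\<in>A. b < a}. T a b)"
      by (rule sum.union_disjoint) (use assms in auto)
    finally show "(\<Sum>b\<in>A - {a}. T a b) = (\<Sum>b\<in>{b\<in>A. a < b}. T a b) + (\<Sum>b\<in>{b\<in>A. b < a}. T a b)" .
  qed
  also have "\<dots> = (\<Sum>a\<in>A. \<Sum>b\<in>{b\<in>A. a < b}. T a b) + (\<Sum>a\<in>A. \<Sum>b\<in>{b\<in>A. b < a}. T a b)"
    by (simp add: sum.distrib)
  also have "(\<Sum>a\<in>A. \<Sum>b\<in>{b\<in>A. b < a}. T a b) = (\<Sum>b\<in>A. \<Sum>a\<in>{a\<in>A. b < a}. T a b)"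
    using sum.swap_restrict[OF assms assms, of T "\<lambda>a b. b < a"] by simp
  finally show ?thesis by (simp add: sum.distrib)
qed

lemma rank_in_remove_less:
  assumes "finite A" "a \<in> A" "a < b"
  shows "rank_in A b = Suc (rank_in (A - {a}) b)"
proof -
  have "{x\<in>A - {a}. x < b} = {x\<in>A. x < b} - {a}" by auto
  moreover have "a \<in> {x\<in>A. x < b}" "finite {x\<in>A. x < b}" using assms by auto
  ultimately show ?thesis unfolding rank_in_def by (simp only: card_Suc_Diff1)
qed

lemma rank_in_remove_greater:
  assumes "a < b"
  shows "rank_in (A - {b}) a = rank_in A a"
proof -
  have "{x\<in>A - {b}. x < a} = {x\<in>A. x < a}" using assms by auto
  then show ?thesis by (simp add: rank_in_def)
qed

lemma qminor_Cons_Cons: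
  assumes "finite A" "card A = Suc (Suc (length C))" "monomial_gens Y"
  shows "qminor Y p A (c # d # C) = (\<Sum>a\<in>A. \<Sum>b\<in>{b\<in>A. a < b}.
     scalar ((- p) ^ (rank_in A a + rank_in (A - {a}) b)) * amul (qminor2 Y p a b c d) (qminor Y p (A - {a} - {b}) C))"
proof -
  have ne: "A \<noteq> {}" using assms(2) by auto
  define T where "T a b = scalar ((- p) ^ (rank_in A a + rank_in (A - {a}) b)) * amul (amul (Y a c) (Y b d)) (qminor Y p (A - {a} - {b}) C)" for a b
  have "qminor Y p A (c # d # C) = (\<Sum>a\<in>A. scalar ((- p) ^ rank_in A a) * amul (Y a c) (qminor Y p (A - {a}) (d # C)))"
    by (rule qminor_Cons[OF assms(1) ne])
  also have "\<dots> = (\<Sum>a\<in>A. \<Sum>b\<in>A - {a}. T a b)"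
  proof (rule sum.cong[OF refl])
    fix a assume a: "a \<in> A"
    have "card (A - {a}) = Suc (length C)" using assms(1,2) a by (simp add: card_Diff_singleton)
    then have ne2: "A - {a} \<noteq> {}" by (metis card.empty nat.distinct(1))
    show "scalar ((- p) ^ rank_in A a) * amul (Y a c) (qminor Y p (A - {a}) (d # C)) = (\<Sum>b\<in>A - {a}. T a b)"
      unfolding qminor_Cons[OF finite_Diff[OF assms(1)] ne2] T_def
      by (simp add: amul_sum_right amul_scalar_right amul_gen_assoc[OF assms(3)] sum_distrib_left power_add scalar_mult mult.assoc)
  qed
  also have "\<dots> = (\<Sum>a\<in>A. \<Sum>b\<in>{b\<in>A. a < b}. T a b + T b a)" by (rule sum_distinct_pairs[OF assms(1)])
  also have "\<dots> = (\<Sum>a\<in>A. \<Sum>b\<in>{b\<in>A. a < b}.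
     scalar ((- p) ^ (rank_in A a + rank_in (A - {a}) b)) * amul (qminor2 Y p a b c d) (qminor Y p (A - {a} - {b}) C))"
  proof (intro sum.cong refl)
    fix a b assume a: "a \<in> A" and b: "b \<in> {b\<in>A. a < b}"
    then have "rank_in A b = Suc (rank_in (A - {a}) b)" "rank_in (A - {b}) a = rank_in A a"
      using rank_in_remove_less[OF assms(1)] rank_in_remove_greater by auto
    moreover have "A - {b} - {a} = A - {a} - {b}" by auto
    ultimately show "T a b + T b a = scalar ((- p) ^ (rank_in A a + rank_in (A - {a}) b)) *
        amul (qminor2 Y p a b c d) (qminor Y p (A - {a} - {b}) C)"
      unfolding T_def qminor2_def
      by (simp add: amul_diff_left amul_scalar_left scalar_mult scalar_minus algebra_simps)
  qed
  finally show ?thesis .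
qed

definition qmatrix_mod :: "nat \<Rightarrow> (nat \<Rightarrow> nat \<Rightarrow> 'r::comm_ring_1 elt) \<Rightarrow> 'r \<Rightarrow> 'r \<Rightarrow> 'r elt set \<Rightarrow> bool" where
  "qmatrix_mod n Y p pinv G \<longleftrightarrow> qmat_rels n Y p pinv \<subseteq> G \<and> p * pinv = 1 \<and> monomial_gens Y"

lemma qminor_swap_cols:
  assumes g: "qmatrix_mod n Y p pinv G" and c: "c \<in> {1..n}" and d: "d \<in> {1..n}" and dc: "d < c"
  shows "finite A \<Longrightarrow> A \<subseteq> {1..n} \<Longrightarrow> card A = length C1 + Suc (Suc (length C2)) \<Longrightarrow>
    cong_ideal G (qminor Y p A (C1 @ c # d # C2)) (scalar (- p) * qminor Y p A (C1 @ d # c # C2))"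
proof (induct C1 arbitrary: A)
  case Nil
  have rels: "qmat_rels n Y p pinv \<subseteq> G" "p * pinv = 1" and im: "monomial_gens Y" using g by (auto simp: qmatrix_mod_def)
  have cA: "card A = Suc (Suc (length C2))" using Nil by simp
  have eq: "scalar (- p) * qminor Y p A (d # c # C2) = (\<Sum>a\<in>A. \<Sum>b\<in>{b\<in>A. a < b}.
     scalar ((- p) ^ (rank_in A a + rank_in (A - {a}) b)) * amul (scalar (- p) * qminor2 Y p a b d c) (qminor Y p (A - {a} - {b}) C2))"
    unfolding qminor_Cons_Cons[OF Nil(1) cA im]
    by (simp add: sum_distrib_left amul_scalar_left mult.left_commute)
  have ev: "cong_ideal G (qminor Y p A (c # d # C2)) (\<Sum>a\<in>A. \<Sum>b\<in>{b\<in>A. a < b}.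
     scalar ((- p) ^ (rank_in A a + rank_in (A - {a}) b)) * amul (scalar (- p) * qminor2 Y p a b d c) (qminor Y p (A - {a} - {b}) C2))"
    unfolding qminor_Cons_Cons[OF Nil(1) cA im]
  proof (intro cong_ideal_sum cong_ideal_scalar cong_ideal_amul_right fin_supp_qminor im)
    fix a b assume a: "a \<in> A" and b: "b \<in> {b \<in> A. a < b}"
    show "cong_ideal G (qminor2 Y p a b c d) (scalar (- p) * qminor2 Y p a b d c)"
      by (rule qminor2_swap_cols[OF rels]) (use a b Nil(2) c d dc in auto)
  qed
  show ?case unfolding append_Nil eq by (rule ev)
next
  case (Cons x C1)
  have im: "monomial_gens Y" using g by (auto simp: qmatrix_mod_def)
  have ne: "A \<noteq> {}" using Cons(4) by auto
  have eq: "scalar (- p) * qminor Y p A ((x # C1) @ d # c # C2) = (\<Sum>a\<in>A. scalar ((- p) ^ rank_in A a) *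
      amul (Y a x) (scalar (- p) * qminor Y p (A - {a}) (C1 @ d # c # C2)))"
    by (simp add: qminor_Cons[OF Cons(2) ne] sum_distrib_left amul_scalar_right mult.left_commute)
  have ev: "cong_ideal G (qminor Y p A ((x # C1) @ c # d # C2)) (\<Sum>a\<in>A. scalar ((- p) ^ rank_in A a) *
      amul (Y a x) (scalar (- p) * qminor Y p (A - {a}) (C1 @ d # c # C2)))"
    unfolding append_Cons qminor_Cons[OF Cons(2) ne]
  proof (intro cong_ideal_sum cong_ideal_scalar cong_ideal_amul_left fin_supp_gen im)
    fix a assume a: "a \<in> A"
    show "cong_ideal G (qminor Y p (A - {a}) (C1 @ c # d # C2)) (scalar (- p) * qminor Y p (A - {a}) (C1 @ d # c # C2))"
      by (rule Cons(1)) (use Cons(2-4) a in \<open>auto simp: card_Diff_singleton\<close>)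
  qed
  show ?case unfolding eq by (rule ev)
qed

lemma qminor_swap_cols_inv:
  assumes g: "qmatrix_mod n Y p pinv G" and c: "c \<in> {1..n}" and d: "d \<in> {1..n}" and dc: "d < c"
    and A: "finite A" "A \<subseteq> {1..n}" "card A = length C1 + Suc (Suc (length C2))"
  shows "cong_ideal G (qminor Y p A (C1 @ d # c # C2)) (scalar (- pinv) * qminor Y p A (C1 @ c # d # C2))"
proof -
  have pp: "p * pinv = 1" using g by (simp add: qmatrix_mod_def)
  have "cong_ideal G (scalar (- pinv) * qminor Y p A (C1 @ c # d # C2)) (scalar (- pinv) * (scalar (- p) * qminor Y p A (C1 @ d # c # C2)))"
    by (rule cong_ideal_scalar, rule qminor_swap_cols[OF g c d dc A])
  also have "scalar (- pinv) * (scalar (- p) * qminor Y p A (C1 @ d # c # C2)) = qminor Y p A (C1 @ d # c # C2)"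
    by (simp add: mult.assoc[symmetric] scalar_mult[symmetric] pp mult.commute[of pinv] scalar_one)
  finally show ?thesis by (rule cong_ideal_sym)
qed

lemma qminor_repeated_col_in_ideal:
  assumes g: "qmatrix_mod n Y p pinv G" and c: "c \<in> {1..n}"
  shows "finite A \<Longrightarrow> A \<subseteq> {1..n} \<Longrightarrow> card A = length C1 + Suc (Suc (length C2)) \<Longrightarrow>
    qminor Y p A (C1 @ c # c # C2) \<in> ideal_gen G"
proof (induct C1 arbitrary: A)
  case Nil
  have rels: "qmat_rels n Y p pinv \<subseteq> G" and im: "monomial_gens Y" using g by (auto simp: qmatrix_mod_def)
  have cA: "card A = Suc (Suc (length C2))" using Nil by simp
  show ?case unfolding append_Nil qminor_Cons_Cons[OF Nil(1) cA im]
  proof (intro ideal_gen_sum ideal_gen_scalar ideal_gen_amul_right fin_supp_qminor im)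
    fix a b assume a: "a \<in> A" and b: "b \<in> {b \<in> A. a < b}"
    show "qminor2 Y p a b c c \<in> ideal_gen G"
      by (rule qminor2_same_col_in_ideal[OF rels]) (use a b Nil(2) c in auto)
  qed
next
  case (Cons x C1)
  have im: "monomial_gens Y" using g by (auto simp: qmatrix_mod_def)
  have ne: "A \<noteq> {}" using Cons(4) by auto
  show ?case unfolding append_Cons qminor_Cons[OF Cons(2) ne]
  proof (intro ideal_gen_sum ideal_gen_scalar ideal_gen_amul_left fin_supp_gen im)
    fix a assume a: "a \<in> A"
    show "qminor Y p (A - {a}) (C1 @ c # c # C2) \<in> ideal_gen G"
      by (rule Cons(1)) (use Cons(2-4) a in \<open>auto simp: card_Diff_singleton\<close>)
  qed
qed

lemma qminor_rev_insort_col: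
  assumes g: "qmatrix_mod n Y p pinv G" and c: "c \<in> {1..n}"
  shows "finite A \<Longrightarrow> A \<subseteq> {1..n} \<Longrightarrow> set D \<subseteq> {1..n} \<Longrightarrow> sorted_wrt (<) D \<Longrightarrow>
    card A = length C1 + length D + Suc (length C2) \<Longrightarrow>
    cong_ideal G (qminor Y p A (C1 @ rev D @ c # C2))
      (if c \<in> set D then 0
       else scalar ((- pinv) ^ card {x\<in>set D. x < c}) * qminor Y p A (C1 @ rev (insort c D) @ C2))"
proof (induct D arbitrary: C2)
  case Nil
  then show ?case by (simp add: scalar_one)
next
  case (Cons e D)
  have e: "e \<in> {1..n}" and D: "set D \<subseteq> {1..n}" "sorted_wrt (<) D" and e_less: "\<forall>x\<in>set D. e < x"
    using Cons(4,5) by auto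
  have lst: "C1 @ rev (e # D) @ c # C2 = (C1 @ rev D) @ e # c # C2" by simp
  consider "c < e" | "c = e" | "e < c" by fastforce
  then show ?case
  proof cases
    case 1
    then have nin: "c \<notin> set (e # D)" and ins: "insort c (e # D) = c # e # D"
      and none: "{x\<in>set (e # D). x < c} = {}"
      using e_less by auto
    show ?thesis unfolding if_not_P[OF nin] ins none by (simp add: scalar_one)
  next
    case 2
    have "qminor Y p A ((C1 @ rev D) @ e # e # C2) \<in> ideal_gen G"
      by (rule qminor_repeated_col_in_ideal[OF g e Cons(2,3)]) (use Cons(6) in simp)
    then show ?thesis by (simp only: 2 lst[unfolded 2] if_P[OF list.set_intros(1)] cong_ideal_def diff_zero)
  next
    case 3
    have "cong_ideal G (qminor Y p A (C1 @ rev (e # D) @ c # C2)) (scalar (- pinv) * qminor Y p A (C1 @ rev D @ c # e # C2))"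
      unfolding lst using qminor_swap_cols_inv[OF g c e 3 Cons(2,3), of "C1 @ rev D" C2] Cons(6) by simp
    also have "cong_ideal G \<dots> (scalar (- pinv) * (if c \<in> set D then 0
        else scalar ((- pinv) ^ card {x\<in>set D. x < c}) * qminor Y p A (C1 @ rev (insort c D) @ e # C2)))"
      by (rule cong_ideal_scalar, rule Cons(1)[OF Cons(2,3) D]) (use Cons(6) in simp)
    also have "\<dots> = (if c \<in> set (e # D) then 0
       else scalar ((- pinv) ^ card {x\<in>set (e # D). x < c}) * qminor Y p A (C1 @ rev (insort c (e # D)) @ C2))"
    proof -
      have "{x\<in>set (e # D). x < c} = insert e {x\<in>set D. x < c}" "e \<notin> {x\<in>set D. x < c}"
        using 3 e_less by auto
      then show ?thesis using 3 by (simp add: scalar_mult[symmetric] mult.assoc[symmetric])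
    qed
    finally show ?thesis .
  qed
qed

lemma qminor_rev_sort_cols:
  assumes g: "qmatrix_mod n Y p pinv G"
  shows "finite A \<Longrightarrow> A \<subseteq> {1..n} \<Longrightarrow> set L \<subseteq> {1..n} \<Longrightarrow> card A = length C1 + length L + length C2 \<Longrightarrow>
    cong_ideal G (qminor Y p A (C1 @ rev L @ C2))
      (if distinct L then scalar ((- pinv) ^ list_inv L) * qminor Y p A (C1 @ rev (sort L) @ C2) else 0)"
proof (induct L arbitrary: C2)
  case Nil
  then show ?case by (simp add: scalar_one list_inv_def)
next
  case (Cons c L)
  have c: "c \<in> {1..n}" and L: "set L \<subseteq> {1..n}" using Cons(4) by auto
  have "cong_ideal G (qminor Y p A (C1 @ rev (c # L) @ C2))
      (if distinct L then scalar ((- pinv) ^ list_inv L) * qminor Y p A (C1 @ rev (sort L) @ c # C2) else 0)"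
    using Cons(1)[OF Cons(2,3) L, of "c # C2"] Cons(5) by simp
  also have "cong_ideal G \<dots> (if distinct L then scalar ((- pinv) ^ list_inv L) *
      (if c \<in> set L then 0 else scalar ((- pinv) ^ card {x\<in>set L. x < c}) *
         qminor Y p A (C1 @ rev (insort c (sort L)) @ C2)) else 0)"
  proof (cases "distinct L")
    case True
    have "set (sort L) \<subseteq> {1..n}" "sorted_wrt (<) (sort L)"
      "card A = length C1 + length (sort L) + Suc (length C2)"
      using L True Cons(5) by (simp_all add: strict_sorted_iff)
    from qminor_rev_insort_col[OF g c Cons(2,3) this]
    have "cong_ideal G (qminor Y p A (C1 @ rev (sort L) @ c # C2)) (if c \<in> set L then 0
        else scalar ((- pinv) ^ card {x\<in>set L. x < c}) * qminor Y p A (C1 @ rev (insort c (sort L)) @ C2))"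
      unfolding set_sort .
    then show ?thesis unfolding if_P[OF True] by (rule cong_ideal_scalar)
  qed simp
  also have "\<dots> = (if distinct (c # L) then scalar ((- pinv) ^ list_inv (c # L)) *
      qminor Y p A (C1 @ rev (sort (c # L)) @ C2) else 0)"
  proof (cases "distinct (c # L)")
    case True
    then have "length (filter (\<lambda>x. x < c) L) = card {x\<in>set L. x < c}"
      by (simp add: distinct_length_filter Collect_conj_eq Int_commute)
    then show ?thesis using True by (simp add: list_inv_Cons power_add scalar_mult mult.assoc mult.commute)
  qed auto
  finally show ?case .
qed

lemma rank_in_Min: "finite A \<Longrightarrow> rank_in A (Min A) = 0"
  using Min_le by (fastforce simp: rank_in_def)

lemma Min_remove_non_min:
  assumes "finite A" "a \<in> A" "a \<noteq> Min A"
  shows "Min (A - {a}) = Min A"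
proof (rule Min_eqI)
  show "finite (A - {a})" using assms by simp
  show "Min A \<in> A - {a}" using assms by (auto intro: Min_in)
  fix y assume "y \<in> A - {a}" then show "Min A \<le> y" using assms by simp
qed

lemma rank_in_remove_Min:
  assumes "finite A" "a \<in> A - {Min A}"
  shows "rank_in A a = Suc (rank_in (A - {Min A}) a)"
proof -
  have "Min A \<in> A" "Min A < a" using assms by (auto intro: Min_in simp: less_le)
  then show ?thesis by (rule rank_in_remove_less[OF assms(1)])
qed

lemma sorted_list_of_set_remove_non_Min:
  assumes "finite B" "b \<in> B" "b \<noteq> Min B"
  shows "sorted_list_of_set (B - {b}) = Min B # sorted_list_of_set (B - {Min B} - {b})"
proof -
  have "Min B \<in> B" using assms(1,2) by (auto intro: Min_in)
  moreover have "Min (B - {b}) = Min B" by (rule Min_remove_non_min[OF assms])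
  moreover have "B - {b} - {Min B} = B - {Min B} - {b}" by auto
  ultimately have "B - {b} \<noteq> {}" "Min (B - {b}) = Min B" using assms(3) by auto
  with \<open>B - {b} - {Min B} = B - {Min B} - {b}\<close> show ?thesis
    using sorted_list_of_set_nonempty[of "B - {b}"] assms(1) by simp
qed

lemma qminor_remove_Min_first_col:
  assumes fA: "finite A" and Ane: "A - {Min A} \<noteq> {}" and fB: "finite B" and b: "b \<in> B" "b \<noteq> Min B"
  shows "(\<Sum>a\<in>A - {Min A}. scalar ((- p) ^ rank_in A a) *
            amul (Y a (Min B)) (qminor Y p (A - {Min A} - {a}) (sorted_list_of_set (B - {Min B} - {b}))))
       = scalar (- p) * qminor Y p (A - {Min A}) (sorted_list_of_set (B - {b}))"
  unfolding sorted_list_of_set_remove_non_Min[OF fB b] qminor_Cons[OF finite_Diff[OF fA] Ane] sum_distrib_left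
  by (rule sum.cong[OF refl]) (simp only: rank_in_remove_Min[OF fA] power_Suc scalar_mult mult.assoc)

lemma qminor_first_row_reassemble:
  assumes fA: "finite A" and Ane: "A - {Min A} \<noteq> {}" and fB: "finite B" and im: "monomial_gens Y"
  shows "(\<Sum>a\<in>A - {Min A}. \<Sum>b\<in>B - {Min B}. scalar ((- p) ^ rank_in A a * (- p) ^ rank_in (B - {Min B}) b) *
      amul (amul (Y (Min A) b) (Y a (Min B))) (qminor Y p (A - {Min A} - {a}) (sorted_list_of_set (B - {Min B} - {b}))))
    = (\<Sum>b\<in>B - {Min B}. scalar ((- p) ^ rank_in B b) *
      amul (Y (Min A) b) (qminor Y p (A - {Min A}) (sorted_list_of_set (B - {b}))))"
proof (subst sum.swap, rule sum.cong[OF refl])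
  fix b assume b: "b \<in> B - {Min B}"
  let ?D = "\<lambda>a. qminor Y p (A - {Min A} - {a}) (sorted_list_of_set (B - {Min B} - {b}))"
  have "(\<Sum>a\<in>A - {Min A}. scalar ((- p) ^ rank_in A a * (- p) ^ rank_in (B - {Min B}) b) *
      amul (amul (Y (Min A) b) (Y a (Min B))) (?D a)) = scalar ((- p) ^ rank_in (B - {Min B}) b) *
      amul (Y (Min A) b) (\<Sum>a\<in>A - {Min A}. scalar ((- p) ^ rank_in A a) * amul (Y a (Min B)) (?D a))"
    by (simp add: amul_sum_right amul_scalar_right amul_gen_assoc[OF im] sum_distrib_left
        scalar_mult mult.assoc mult.left_commute)
  also have "\<dots> = scalar ((- p) ^ rank_in (B - {Min B}) b) *
      amul (Y (Min A) b) (scalar (- p) * qminor Y p (A - {Min A}) (sorted_list_of_set (B - {b})))"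
    using qminor_remove_Min_first_col[OF fA Ane fB, of b p Y] b by simp
  also have "\<dots> = scalar ((- p) ^ rank_in B b) * amul (Y (Min A) b) (qminor Y p (A - {Min A}) (sorted_list_of_set (B - {b})))"
    using rank_in_remove_Min[OF fB b] by (simp only: amul_scalar_right power_Suc scalar_mult mult.assoc mult.left_commute)
  finally show "(\<Sum>a\<in>A - {Min A}. scalar ((- p) ^ rank_in A a * (- p) ^ rank_in (B - {Min B}) b) *
      amul (amul (Y (Min A) b) (Y a (Min B))) (?D a)) =
    scalar ((- p) ^ rank_in B b) * amul (Y (Min A) b) (qminor Y p (A - {Min A}) (sorted_list_of_set (B - {b})))" .
qed

text \<open>
  For increasing columns, the relations are needed only to commute x_ac with x_mb, where the first
  row m lies above a and the first column c left of b.
\<close>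

lemma qminor_first_row_expansion:
  assumes g: "qmatrix_mod n Y p pinv G"
  shows "finite B \<Longrightarrow> B \<noteq> {} \<Longrightarrow> B \<subseteq> {1..n} \<Longrightarrow> finite A \<Longrightarrow> A \<subseteq> {1..n} \<Longrightarrow> card A = card B \<Longrightarrow>
    cong_ideal G (qminor Y p A (sorted_list_of_set B))
      (\<Sum>b\<in>B. scalar ((- p) ^ rank_in B b) *
         amul (Y (Min A) b) (qminor Y p (A - {Min A}) (sorted_list_of_set (B - {b}))))"
proof (induct "card B" arbitrary: A B rule: less_induct)
  case less
  have rels: "qmat_rels n Y p pinv \<subseteq> G" and im: "monomial_gens Y" using g by (auto simp: qmatrix_mod_def)
  note fB = less(2) and Bne = less(3) and BN = less(4) and fA = less(5) and AN = less(6) and cAB = less(7)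
  define c where "c = Min B"
  define B' where "B' = B - {c}"
  define m where "m = Min A"
  let ?rhs = "\<lambda>b. scalar ((- p) ^ rank_in B b) * amul (Y m b) (qminor Y p (A - {m}) (sorted_list_of_set (B - {b})))"
  have Ane: "A \<noteq> {}" using cAB Bne fB by auto
  have cB: "c \<in> B" unfolding c_def using fB Bne by (rule Min_in)
  have mA: "m \<in> A" unfolding m_def using fA Ane by (rule Min_in)
  have fB': "finite B'" using fB by (simp add: B'_def)
  have cB': "\<forall>b\<in>B'. c < b" unfolding B'_def c_def using fB by (auto simp: less_le)
  have ma: "\<forall>a\<in>A - {m}. m < a" unfolding m_def using fA by (auto simp: less_le)
  have cAB': "card (A - {m}) = card B'" unfolding B'_def using fA fB mA cB cAB by (simp add: card_Diff_singleton)
  have split_lhs: "qminor Y p A (sorted_list_of_set B) = amul (Y m c) (qminor Y p (A - {m}) (sorted_list_of_set B'))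
     + (\<Sum>a\<in>A - {m}. scalar ((- p) ^ rank_in A a) * amul (Y a c) (qminor Y p (A - {a}) (sorted_list_of_set B')))"
    unfolding sorted_list_of_set_nonempty[OF fB Bne] qminor_Cons[OF fA Ane] sum.remove[OF fA mA]
    by (simp add: m_def c_def B'_def rank_in_Min[OF fA] scalar_one)
  have split_rhs: "(\<Sum>b\<in>B. ?rhs b) = amul (Y m c) (qminor Y p (A - {m}) (sorted_list_of_set B')) + (\<Sum>b\<in>B'. ?rhs b)"
    unfolding B'_def sum.remove[OF fB cB] by (simp add: c_def rank_in_Min[OF fB] scalar_one)
  have "cong_ideal G (\<Sum>a\<in>A - {m}. scalar ((- p) ^ rank_in A a) * amul (Y a c) (qminor Y p (A - {a}) (sorted_list_of_set B')))
     (\<Sum>b\<in>B'. ?rhs b)"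
  proof (cases "B' = {}")
    case True
    then have "A - {m} = {}" using cAB' fA by simp
    then show ?thesis unfolding True by (simp only: sum.empty cong_ideal_refl)
  next
    case False
    define D where "D a b = qminor Y p (A - {m} - {a}) (sorted_list_of_set (B' - {b}))" for a b
    define w where "w a b = scalar ((- p) ^ rank_in A a * (- p) ^ rank_in B' b)" for a b
    have Amne: "A - {m} \<noteq> {}" using cAB' False fB' by (metis card.empty card_0_eq)
    have "cong_ideal G (\<Sum>a\<in>A - {m}. scalar ((- p) ^ rank_in A a) * amul (Y a c) (qminor Y p (A - {a}) (sorted_list_of_set B')))
        (\<Sum>a\<in>A - {m}. \<Sum>b\<in>B'. w a b * amul (amul (Y a c) (Y m b)) (D a b))"
    proof (rule cong_ideal_sum)
      fix a assume a: "a \<in> A - {m}"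
      have Ma: "Min (A - {a}) = m" unfolding m_def by (rule Min_remove_non_min) (use fA a m_def in auto)
      have e: "A - {a} - {m} = A - {m} - {a}" by auto
      have "card B' < card B" unfolding B'_def by (rule card_Diff1_less[OF fB cB])
      moreover have "card (A - {a}) = card B'" using cAB' fA a mA by (simp add: card_Diff_singleton)
      ultimately have "cong_ideal G (qminor Y p (A - {a}) (sorted_list_of_set B'))
        (\<Sum>b\<in>B'. scalar ((- p) ^ rank_in B' b) *
           amul (Y (Min (A - {a})) b) (qminor Y p (A - {a} - {Min (A - {a})}) (sorted_list_of_set (B' - {b}))))"
        using less(1)[OF _ fB' False] BN AN fA by (auto simp: B'_def)
      then have "cong_ideal G (qminor Y p (A - {a}) (sorted_list_of_set B'))
        (\<Sum>b\<in>B'. scalar ((- p) ^ rank_in B' b) * amul (Y m b) (D a b))"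
        unfolding Ma e D_def .
      then have "cong_ideal G (scalar ((- p) ^ rank_in A a) * amul (Y a c) (qminor Y p (A - {a}) (sorted_list_of_set B')))
         (scalar ((- p) ^ rank_in A a) * amul (Y a c) (\<Sum>b\<in>B'. scalar ((- p) ^ rank_in B' b) * amul (Y m b) (D a b)))"
        by (intro cong_ideal_scalar cong_ideal_amul_left fin_supp_gen im)
      then show "cong_ideal G (scalar ((- p) ^ rank_in A a) * amul (Y a c) (qminor Y p (A - {a}) (sorted_list_of_set B')))
          (\<Sum>b\<in>B'. w a b * amul (amul (Y a c) (Y m b)) (D a b))"
        by (simp add: w_def amul_sum_right amul_scalar_right amul_gen_assoc[OF im] sum_distrib_left scalar_mult mult.assoc)
    qed
    also have "cong_ideal G \<dots> (\<Sum>a\<in>A - {m}. \<Sum>b\<in>B'. w a b * amul (amul (Y m b) (Y a c)) (D a b))"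
    proof (unfold w_def D_def, intro cong_ideal_sum cong_ideal_scalar cong_ideal_amul_right fin_supp_qminor im)
      fix a b assume a: "a \<in> A - {m}" and b: "b \<in> B'"
      have "amul (Y m b) (Y a c) - amul (Y a c) (Y m b) \<in> G"
        by (rule qmat_rel_commute[OF rels]) (use a b ma cB' AN BN cB mA in \<open>auto simp: B'_def\<close>)
      then show "cong_ideal G (amul (Y a c) (Y m b)) (amul (Y m b) (Y a c))" by (rule cong_ideal_sym[OF cong_ideal_gen])
    qed
    also have "(\<Sum>a\<in>A - {m}. \<Sum>b\<in>B'. w a b * amul (amul (Y m b) (Y a c)) (D a b)) = (\<Sum>b\<in>B'. ?rhs b)"
      using qminor_first_row_reassemble[OF fA _ fB im, of p] Amne by (simp add: w_def D_def m_def c_def B'_def)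
    finally show ?thesis .
  qed
  then show ?case unfolding split_lhs split_rhs m_def[symmetric] by (rule cong_ideal_add[OF cong_ideal_refl])
qed

lemma qminor_sorted_cols_eq_qminor_col:
  assumes g: "qmatrix_mod n Y p pinv G"
  shows "finite A \<Longrightarrow> A \<subseteq> {1..n} \<Longrightarrow> finite B \<Longrightarrow> B \<subseteq> {1..n} \<Longrightarrow> card A = card B \<Longrightarrow>
    cong_ideal G (qminor Y p A (sorted_list_of_set B)) (qminor_col Y p (sorted_list_of_set A) B)"
proof (induct "card A" arbitrary: A B)
  case 0
  then have "A = {}" "B = {}" by auto
  then show ?case by (simp add: qminor_Nil qminor_col_Nil)
next
  case (Suc k)
  have im: "monomial_gens Y" using g by (auto simp: qmatrix_mod_def)
  have Ane: "A \<noteq> {}" and Bne: "B \<noteq> {}" using Suc by auto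
  define m where "m = Min A"
  have mA: "m \<in> A" unfolding m_def using Suc(3) Ane by (rule Min_in)
  have slA: "sorted_list_of_set A = m # sorted_list_of_set (A - {m})" unfolding m_def by (rule sorted_list_of_set_nonempty[OF Suc(3) Ane])
  have "cong_ideal G (qminor Y p A (sorted_list_of_set B))
      (\<Sum>b\<in>B. scalar ((- p) ^ rank_in B b) * amul (Y m b) (qminor Y p (A - {m}) (sorted_list_of_set (B - {b}))))"
    unfolding m_def by (rule qminor_first_row_expansion[OF g Suc(5) Bne Suc(6) Suc(3) Suc(4) Suc(7)])
  also have "cong_ideal G \<dots> (\<Sum>b\<in>B. scalar ((- p) ^ rank_in B b) * amul (Y m b) (qminor_col Y p (sorted_list_of_set (A - {m})) (B - {b})))"
  proof (intro cong_ideal_sum cong_ideal_scalar cong_ideal_amul_left fin_supp_gen im)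
    fix b assume b: "b \<in> B"
    show "cong_ideal G (qminor Y p (A - {m}) (sorted_list_of_set (B - {b}))) (qminor_col Y p (sorted_list_of_set (A - {m})) (B - {b}))"
      by (rule Suc(1)) (use Suc(2-7) mA b in \<open>auto simp: card_Diff_singleton\<close>)
  qed
  also have "(\<Sum>b\<in>B. scalar ((- p) ^ rank_in B b) * amul (Y m b) (qminor_col Y p (sorted_list_of_set (A - {m})) (B - {b}))) = qminor_col Y p (sorted_list_of_set A) B"
    unfolding slA by (rule qminor_col_Cons[OF Suc(5) Bne, symmetric])
  finally show ?case .
qed

section \<open>Contractions modulo det_q^(1)\<close>

abbreviation det1_rels :: "nat \<Rightarrow> 'r::comm_ring_1 \<Rightarrow> 'r \<Rightarrow> 'r elt set" where
  "det1_rels n q qi \<equiv> rels n q qi \<union> {qdet1 n}"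

lemma qmatrix_mod_X: "q * qi = 1 \<Longrightarrow> qmatrix_mod n X q qi (det1_rels n q qi)"
  by (auto simp: qmatrix_mod_def rels_def monomial_gens_X)
lemma qmatrix_mod_Xs: "q * qi = 1 \<Longrightarrow> qmatrix_mod n Xs qi q (det1_rels n q qi)"
  by (auto simp: qmatrix_mod_def rels_def monomial_gens_Xs mult.commute)

lemma amul_X_Xs: "amul (X i l) (Xs j l) = mono ([(i, l)], [(j, l)])"
  by (simp add: X_def Xs_def amul_mono_mono)

text \<open>
  For i = j, the last defining relation identifies all diagonal contractions with the one for
  i = 1, which is det_q^(1).
\<close>

lemma contraction_in_ideal:
  fixes q qi :: "'r::comm_ring_1"
  assumes "n \<ge> 1" "i \<in> {1..n}" "j \<in> {1..n}"
  shows "(\<Sum>l\<in>{1..n}. mono ([(i, l)], [(j, l)])) \<in> ideal_gen (det1_rels n q qi)"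
proof (cases "i = j")
  case False
  have "asum (\<lambda>k. amul (X i k) (Xs j k)) {1..n} \<in> rels n q qi"
    unfolding rels_def using assms False by blast
  then show ?thesis by (intro ideal_gen.gen) (simp add: asum_eq_sum amul_X_Xs)
next
  case True
  define T where "T = asum (\<lambda>k. asmult (q ^ (2 * k) * qi ^ (2 * 1)) (amul (X k 1) (Xs k 1))) {1..n}"
  define E where "E a = (\<Sum>l\<in>{1..n}. (mono ([(a, l)], [(a, l)]) :: 'r elt))" for a :: nat
  have "asub T (asum (\<lambda>k. amul (X a k) (Xs a k)) {1..n}) \<in> rels n q qi" if "a \<in> {1..n}" for a
  proof -
    have "(1::nat) \<in> {1..n}" using assms(1) by simp
    then show ?thesis unfolding rels_def T_def using that by blast
  qed
  then have TE: "T - E a \<in> ideal_gen (det1_rels n q qi)" if "a \<in> {1..n}" for a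
    using that by (intro ideal_gen.gen) (simp add: asub_eq_minus asum_eq_sum amul_X_Xs E_def)
  have "E 1 \<in> ideal_gen (det1_rels n q qi)"
    by (rule ideal_gen.gen) (simp add: qdet1_def asum_eq_sum amul_X_Xs E_def)
  with TE[of 1] TE[of j] assms have "(T - E 1) - (T - E j) + E 1 \<in> ideal_gen (det1_rels n q qi)"
    by (intro ideal_gen_add[OF ideal_gen_diff]) simp_all
  then show ?thesis using True by (simp add: E_def)
qed

lemma contraction_in_ideal_context:
  assumes "n \<ge> 1" "i \<in> {1..n}" "j \<in> {1..n}"
  shows "(\<Sum>l\<in>{1..n}. mono (lx @ (i, l) # rx, ly @ (j, l) # ry)) \<in> ideal_gen (det1_rels n q qi)"
proof -
  have "(\<Sum>l\<in>{1..n}. mono (lx @ (i, l) # rx, ly @ (j, l) # ry)) =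
     amul (amul (mono (lx, ly)) (\<Sum>l\<in>{1..n}. mono ([(i, l)], [(j, l)]))) (mono (rx, ry))"
    by (simp add: amul_sum_left amul_sum_right amul_mono_mono)
  also have "\<dots> \<in> ideal_gen (det1_rels n q qi)" by (intro ideal_gen_amul_mono_right ideal_gen_amul_mono_left contraction_in_ideal assms)
  finally show ?thesis .
qed

lemma contraction_cong_complement:
  assumes "n \<ge> 1" "i \<in> {1..n}" "j \<in> {1..n}" "D \<subseteq> {1..n}"
  shows "cong_ideal (det1_rels n q qi) (\<Sum>l\<in>D. mono (lx @ (i, l) # rx, ly @ (j, l) # ry))
     (- (\<Sum>l\<in>{1..n} - D. mono (lx @ (i, l) # rx, ly @ (j, l) # ry)))"
proof -
  have tot: "(\<Sum>l\<in>D. mono (lx @ (i, l) # rx, ly @ (j, l) # ry)) + (\<Sum>l\<in>{1..n} - D. mono (lx @ (i, l) # rx, ly @ (j, l) # ry))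
     = (\<Sum>l\<in>{1..n}. mono (lx @ (i, l) # rx, ly @ (j, l) # ry))"
    using assms(4) by (subst sum.union_disjoint[symmetric]) (auto intro: finite_subset simp: Un_Diff_cancel2 Un_absorb2 Un_commute[of D])
  show ?thesis unfolding cong_ideal_def diff_minus_eq_add tot by (rule contraction_in_ideal_context[OF assms(1-3)])
qed

definition tuples :: "nat \<Rightarrow> nat set \<Rightarrow> nat list set" where
  "tuples k D = {xs. set xs \<subseteq> D \<and> length xs = k}"

lemma finite_tuples: "finite D \<Longrightarrow> finite (tuples k D)"
  unfolding tuples_def by (rule finite_lists_length_eq)

lemma sum_tuples_Suc:
  assumes "finite D"
  shows "(\<Sum>K\<in>tuples (Suc k) D. f K) = (\<Sum>l\<in>D. \<Sum>K\<in>tuples k D. f (l # K))"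
proof -
  have e: "tuples (Suc k) D = (\<lambda>(l, K). l # K) ` (D \<times> tuples k D)"
  proof (rule set_eqI)
    fix xs show "xs \<in> tuples (Suc k) D \<longleftrightarrow> xs \<in> (\<lambda>(l, K). l # K) ` (D \<times> tuples k D)"
      unfolding tuples_def by (cases xs) (auto simp: image_iff)
  qed
  have inj: "inj_on (\<lambda>(l, K). l # K) (D \<times> tuples k D)" by (auto simp: inj_on_def)
  show ?thesis unfolding e sum.reindex[OF inj] sum.cartesian_product by (rule sum.cong) (auto simp: split_beta)
qed

lemma sum_tuples_0: "(\<Sum>K\<in>tuples 0 D. f K) = f []"
proof -
  have "tuples 0 D = {[]}" unfolding tuples_def by auto
  then show ?thesis by simp
qed

text \<open>
  The last x-factor and the first x*-factor carry the same column index, so that index is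
  contracted in place and the induction proceeds with the remaining factors.
\<close>

lemma tuple_contraction_cong_complement:
  fixes q qi :: "'r::comm_ring_1"
  assumes n: "n \<ge> 1" and D: "D \<subseteq> {1..n}"
  shows "length a = k \<Longrightarrow> length b = k \<Longrightarrow> set a \<subseteq> {1..n} \<Longrightarrow> set b \<subseteq> {1..n} \<Longrightarrow>
    cong_ideal (det1_rels n q qi) (\<Sum>K\<in>tuples k D. mono (lx @ zip a (rev K) @ rx, ly @ zip b K @ ry))
     (scalar ((-1) ^ k) * (\<Sum>K\<in>tuples k ({1..n} - D). mono (lx @ zip a (rev K) @ rx, ly @ zip b K @ ry)))"
proof (induct k arbitrary: a b rx ly)
  case 0
  then show ?case unfolding sum_tuples_0 by (simp add: scalar_one)
next
  case (Suc k)
  obtain a' la where a: "a = a' @ [la]" using Suc(2) by (metis length_Suc_conv_rev)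
  obtain hb b' where b: "b = hb # b'" using Suc(3) by (metis length_Suc_conv)
  have la: "la \<in> {1..n}" and hb: "hb \<in> {1..n}" using Suc(4,5) a b by auto
  have la': "length a' = k" "length b' = k" "set a' \<subseteq> {1..n}" "set b' \<subseteq> {1..n}" using Suc(2-5) a b by auto
  have fD: "finite D" using D by (rule finite_subset) simp
  have fDc: "finite ({1..n} - D)" by simp
  define F where "F l K = (mono (lx @ zip a' (rev K) @ (la, l) # rx, (ly @ [(hb, l)]) @ zip b' K @ ry) :: 'r elt)" for l K
  have tm: "\<And>l K. length K = k \<Longrightarrow> mono (lx @ zip a (rev (l # K)) @ rx, ly @ zip b (l # K) @ ry) = F l K"
    unfolding F_def a b using la' by simp
  have sumF: "(\<Sum>K\<in>tuples (Suc k) E. mono (lx @ zip a (rev K) @ rx, ly @ zip b K @ ry))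
     = (\<Sum>l\<in>E. \<Sum>K\<in>tuples k E. F l K)" if "finite E" for E
    unfolding sum_tuples_Suc[OF that] by (intro sum.cong refl tm) (simp add: tuples_def)
  have "cong_ideal (det1_rels n q qi) (\<Sum>l\<in>D. \<Sum>K\<in>tuples k D. F l K) (\<Sum>l\<in>D. scalar ((-1) ^ k) * (\<Sum>K\<in>tuples k ({1..n} - D). F l K))"
    unfolding F_def by (intro cong_ideal_sum Suc(1) la')
  also have "(\<Sum>l\<in>D. scalar ((-1) ^ k) * (\<Sum>K\<in>tuples k ({1..n} - D). F l K)) =
      scalar ((-1) ^ k) * (\<Sum>K\<in>tuples k ({1..n} - D). \<Sum>l\<in>D. F l K)"
    by (simp add: sum_distrib_left sum.swap[of _ D])
  also have "cong_ideal (det1_rels n q qi) \<dots> (scalar ((-1) ^ k) * (\<Sum>K\<in>tuples k ({1..n} - D). - (\<Sum>l\<in>{1..n} - D. F l K)))"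
  proof (intro cong_ideal_scalar cong_ideal_sum)
    fix K
    show "cong_ideal (det1_rels n q qi) (\<Sum>l\<in>D. F l K) (- (\<Sum>l\<in>{1..n} - D. F l K))"
      using contraction_cong_complement[of n la hb D q qi "lx @ zip a' (rev K)" rx ly "zip b' K @ ry", OF n la hb D]
      unfolding F_def by simp
  qed
  also have "scalar ((-1) ^ k) * (\<Sum>K\<in>tuples k ({1..n} - D). - (\<Sum>l\<in>{1..n} - D. F l K)) =
      scalar ((-1) ^ Suc k) * (\<Sum>l\<in>{1..n} - D. \<Sum>K\<in>tuples k ({1..n} - D). F l K)"
  proof -
    have sw: "(\<Sum>K\<in>tuples k ({1..n} - D). \<Sum>l\<in>{1..n} - D. F l K) = (\<Sum>l\<in>{1..n} - D. \<Sum>K\<in>tuples k ({1..n} - D). F l K)"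
      by (rule sum.swap)
    show ?thesis unfolding sum_negf sw by (simp add: fun_eq_iff)
  qed
  finally show ?case unfolding sumF[OF fD] sumF[OF fDc] .
qed

lemma gen_prod_X: "gen_prod X R C = mono (zip R C, [])"
proof (induct R arbitrary: C)
  case Nil then show ?case by (simp add: gen_prod_Nil)
next
  case (Cons a R) then show ?case
    by (cases C) (simp_all add: gen_prod_Nil2 gen_prod_Cons X_def amul_mono_mono)
qed

lemma gen_prod_Xs: "gen_prod Xs R C = mono ([], zip R C)"
proof (induct R arbitrary: C)
  case Nil then show ?case by (simp add: gen_prod_Nil)
next
  case (Cons a R) then show ?case
    by (cases C) (simp_all add: gen_prod_Nil2 gen_prod_Cons Xs_def amul_mono_mono)
qed

section \<open>Sums over all tuples versus increasing tuples of columns\<close>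

definition tuple_sum :: "'r::comm_ring_1 \<Rightarrow> nat set \<Rightarrow> nat list \<Rightarrow> nat \<Rightarrow> nat set \<Rightarrow> 'r elt" where
  "tuple_sum q A s' k D = (\<Sum>K\<in>tuples k D. amul (qminor X q A (rev K)) (gen_prod Xs s' K))"

definition incr_tuples :: "nat \<Rightarrow> nat set \<Rightarrow> nat list set" where
  "incr_tuples k D = {J. length J = k \<and> sorted_wrt (<) J \<and> set J \<subseteq> D}"

definition minor_pair_sum :: "'r::comm_ring_1 \<Rightarrow> 'r \<Rightarrow> nat set \<Rightarrow> nat set \<Rightarrow> nat \<Rightarrow> nat set \<Rightarrow> 'r elt" where
  "minor_pair_sum q qi A S k D = (\<Sum>J\<in>incr_tuples k D. amul (qminor X q A (rev J)) (qminor Xs qi S J))"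

lemma tuple_sum_expand:
  "tuple_sum q A s' k E = (\<Sum>R\<in>permutations_of_set A. scalar ((- q) ^ list_inv R) *
      (\<Sum>K\<in>tuples k E. mono (zip R (rev K), zip s' K)))"
  unfolding tuple_sum_def qminor_def
  by (simp add: amul_sum_left amul_scalar_left gen_prod_X gen_prod_Xs amul_mono_mono sum_distrib_left sum.swap[of _ "tuples k E"])

lemma tuple_sum_cong_complement:
  fixes q qi :: "'r::comm_ring_1"
  assumes n: "n \<ge> 1" and D: "D \<subseteq> {1..n}" and A: "finite A" "A \<subseteq> {1..n}" "card A = k"
    and s': "length s' = k" "set s' \<subseteq> {1..n}"
  shows "cong_ideal (det1_rels n q qi) (tuple_sum q A s' k D) (scalar ((-1) ^ k) * tuple_sum q A s' k ({1..n} - D))"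
proof -
  have "cong_ideal (det1_rels n q qi) (tuple_sum q A s' k D) (\<Sum>R\<in>permutations_of_set A. scalar ((- q) ^ list_inv R) *
      (scalar ((-1) ^ k) * (\<Sum>K\<in>tuples k ({1..n} - D). mono (zip R (rev K), zip s' K))))"
    unfolding tuple_sum_expand
  proof (intro cong_ideal_sum cong_ideal_scalar)
    fix R assume R: "R \<in> permutations_of_set A"
    have lR: "length R = k" using R A by (simp add: length_finite_permutations_of_set)
    have sR: "set R \<subseteq> {1..n}" using R A by (auto simp: permutations_of_set_def)
    show "cong_ideal (det1_rels n q qi) (\<Sum>K\<in>tuples k D. mono (zip R (rev K), zip s' K))
        (scalar ((-1) ^ k) * (\<Sum>K\<in>tuples k ({1..n} - D). mono (zip R (rev K), zip s' K)))"
      using tuple_contraction_cong_complement[OF n D lR s'(1) sR s'(2),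
          where lx="[]" and rx="[]" and ly="[]" and ry="[]"] by simp
  qed
  also have "(\<Sum>R\<in>permutations_of_set A. scalar ((- q) ^ list_inv R) *
      (scalar ((-1) ^ k) * (\<Sum>K\<in>tuples k ({1..n} - D). mono (zip R (rev K), zip s' K))))
    = scalar ((-1) ^ k) * tuple_sum q A s' k ({1..n} - D)"
    unfolding tuple_sum_expand by (simp add: sum_distrib_left mult.left_commute)
  finally show ?thesis .
qed

lemma sort_permutation_of_incr_tuple: "J \<in> incr_tuples k D \<Longrightarrow> K \<in> permutations_of_set (set J) \<Longrightarrow> sort K = J"
proof -
  assume J: "J \<in> incr_tuples k D" and K: "K \<in> permutations_of_set (set J)"
  have "sort K = sorted_list_of_set (set K)"
    using permutations_of_setD(2)[OF K] by (simp add: sorted_list_of_set_sort_remdups distinct_remdups_id)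
  also have "set K = set J" using K by (simp add: permutations_of_set_def)
  also have "sorted_list_of_set (set J) = J"
    using J by (simp add: incr_tuples_def sorted_list_of_set_sort_remdups strict_sorted_iff distinct_remdups_id sorted_sort_id)
  finally show ?thesis .
qed

lemma sorted_list_of_set_incr_tuple: "J \<in> incr_tuples k D \<Longrightarrow> sorted_list_of_set (set J) = J"
  by (simp add: incr_tuples_def sorted_list_of_set_sort_remdups strict_sorted_iff distinct_remdups_id sorted_sort_id)

lemma distinct_tuples_eq_UN_permutations:
  "{K\<in>tuples k D. distinct K} = (\<Union>J\<in>incr_tuples k D. permutations_of_set (set J))"
proof (rule set_eqI, rule iffI)
  fix K assume K: "K \<in> {K\<in>tuples k D. distinct K}"
  then have "sort K \<in> incr_tuples k D" by (auto simp: tuples_def incr_tuples_def strict_sorted_iff)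
  moreover have "K \<in> permutations_of_set (set (sort K))" using K by (auto simp: permutations_of_set_def)
  ultimately show "K \<in> (\<Union>J\<in>incr_tuples k D. permutations_of_set (set J))" by blast
next
  fix K assume "K \<in> (\<Union>J\<in>incr_tuples k D. permutations_of_set (set J))"
  then obtain J where J: "J \<in> incr_tuples k D" and K: "K \<in> permutations_of_set (set J)" by blast
  have dK: "distinct K" "set K = set J" using K by (auto simp: permutations_of_set_def)
  have dJ: "distinct J" using J by (simp add: incr_tuples_def strict_sorted_iff)
  have "length K = length J" using distinct_card[OF dK(1)] distinct_card[OF dJ] dK(2) by simp
  then show "K \<in> {K\<in>tuples k D. distinct K}" using J K by (auto simp: tuples_def incr_tuples_def permutations_of_set_def)
qed

lemma finite_incr_tuples: "finite D \<Longrightarrow> finite (incr_tuples k D)"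
  by (rule finite_subset[OF _ finite_tuples[of D k]]) (auto simp: incr_tuples_def tuples_def)

lemma sum_distinct_tuples_by_set:
  assumes "finite D"
  shows "(\<Sum>K\<in>{K\<in>tuples k D. distinct K}. f K) =
    (\<Sum>J\<in>incr_tuples k D. \<Sum>K\<in>permutations_of_set (set J). f K)"
proof -
  have "permutations_of_set (set I) \<inter> permutations_of_set (set J) = {}"
    if "I \<in> incr_tuples k D" "J \<in> incr_tuples k D" "I \<noteq> J" for I J
    using that by (metis disjoint_iff permutations_of_setD(1) sorted_list_of_set_incr_tuple)
  then show ?thesis unfolding distinct_tuples_eq_UN_permutations
    by (intro sum.UNION_disjoint) (auto simp: finite_incr_tuples[OF assms])
qed

lemma tuple_sum_cong_minor_pair_sum:
  fixes q qi :: "'r::comm_ring_1"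
  assumes qq: "q * qi = 1" and n: "n \<ge> 1" and D: "D \<subseteq> {1..n}"
    and A: "finite A" "A \<subseteq> {1..n}" "card A = k" and S: "finite S" "S \<subseteq> {1..n}" "card S = k"
  shows "cong_ideal (det1_rels n q qi) (tuple_sum q A (sorted_list_of_set S) k D) (minor_pair_sum q qi A S k D)"
proof -
  let ?G = "det1_rels n q qi" and ?s = "sorted_list_of_set S"
  have fD: "finite D" using D by (rule finite_subset) simp
  have "cong_ideal ?G (tuple_sum q A ?s k D) (\<Sum>K\<in>tuples k D. amul (if distinct K then
      scalar ((- qi) ^ list_inv K) * qminor X q A (rev (sort K)) else 0) (gen_prod Xs ?s K))"
    unfolding tuple_sum_def
  proof (intro cong_ideal_sum cong_ideal_amul_right fin_supp_gen_prod monomial_gens_Xs)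
    fix K assume "K \<in> tuples k D"
    then show "cong_ideal ?G (qminor X q A (rev K))
        (if distinct K then scalar ((- qi) ^ list_inv K) * qminor X q A (rev (sort K)) else 0)"
      using qminor_rev_sort_cols[OF qmatrix_mod_X[OF qq] A(1,2), of K "[]" "[]"] D A(3)
      by (auto simp: tuples_def)
  qed
  also have "\<dots> = (\<Sum>K\<in>{K\<in>tuples k D. distinct K}.
      amul (scalar ((- qi) ^ list_inv K) * qminor X q A (rev (sort K))) (gen_prod Xs ?s K))"
    unfolding sum.inter_filter[OF finite_tuples[OF fD]] by (rule sum.cong) (simp_all add: amul_zero_left)
  also have "\<dots> = (\<Sum>J\<in>incr_tuples k D. \<Sum>K\<in>permutations_of_set (set J).
      scalar ((- qi) ^ list_inv K) * amul (qminor X q A (rev J)) (gen_prod Xs ?s K))"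
    unfolding sum_distinct_tuples_by_set[OF fD]
    by (intro sum.cong refl) (simp add: sort_permutation_of_incr_tuple amul_scalar_left)
  also have "\<dots> = (\<Sum>J\<in>incr_tuples k D. amul (qminor X q A (rev J)) (qminor_col Xs qi ?s (set J)))"
    by (simp add: qminor_col_def amul_sum_right amul_scalar_right)
  also have "cong_ideal ?G \<dots> (minor_pair_sum q qi A S k D)"
    unfolding minor_pair_sum_def
  proof (intro cong_ideal_sum cong_ideal_amul_left fin_supp_qminor monomial_gens_X)
    fix J assume J: "J \<in> incr_tuples k D"
    have "card (set J) = k" using J by (auto simp: incr_tuples_def strict_sorted_iff distinct_card)
    then have "cong_ideal ?G (qminor Xs qi S (sorted_list_of_set (set J))) (qminor_col Xs qi ?s (set J))"
      using J D S by (intro qminor_sorted_cols_eq_qminor_col[OF qmatrix_mod_Xs[OF qq]]) (auto simp: incr_tuples_def)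
    then show "cong_ideal ?G (qminor_col Xs qi ?s (set J)) (qminor Xs qi S J)"
      unfolding sorted_list_of_set_incr_tuple[OF J] by (rule cong_ideal_sym)
  qed
  finally show ?thesis .
qed

section \<open>The power of q\<close>

lemma zip_append_Cons:
  assumes "length R = length C1 + Suc (length C2)"
  shows "zip R (C1 @ l # C2) = zip (take (length C1) R) C1 @ (R ! length C1, l) # zip (drop (Suc (length C1)) R) C2"
proof -
  have lt: "length C1 < length R" using assms by simp
  have "R = take (length C1) R @ R ! length C1 # drop (Suc (length C1)) R"
    using id_take_nth_drop[OF lt] .
  then have "zip R (C1 @ l # C2) = zip (take (length C1) R @ R ! length C1 # drop (Suc (length C1)) R) (C1 @ l # C2)"
    by simp
  also have "\<dots> = zip (take (length C1) R) C1 @ zip (R ! length C1 # drop (Suc (length C1)) R) (l # C2)"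
    using lt by (intro zip_append) simp
  finally show ?thesis by simp
qed

lemma contraction_minor_pair_in_ideal:
  fixes q qi :: "'r::comm_ring_1"
  assumes n: "n \<ge> 1" and A: "finite A" "A \<subseteq> {1..n}" "card A = length Cs + Suc (length Ds)"
    and S: "finite S" "S \<subseteq> {1..n}" "card S = Suc (length Js)"
  shows "(\<Sum>l\<in>{1..n}. amul (qminor X q A (Cs @ l # Ds)) (qminor Xs qi S (l # Js))) \<in> ideal_gen (det1_rels n q qi)"
proof -
  have expand: "\<And>l. amul (qminor X q A (Cs @ l # Ds)) (qminor Xs qi S (l # Js)) =
     (\<Sum>R'\<in>permutations_of_set S. \<Sum>R\<in>permutations_of_set A.
        scalar ((- qi) ^ list_inv R') * (scalar ((- q) ^ list_inv R) * mono (zip R (Cs @ l # Ds), zip R' (l # Js))))"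
    unfolding qminor_def
    by (simp add: amul_sum_left amul_sum_right amul_scalar_left amul_scalar_right gen_prod_X gen_prod_Xs amul_mono_mono sum_distrib_left)
  have "(\<Sum>l\<in>{1..n}. amul (qminor X q A (Cs @ l # Ds)) (qminor Xs qi S (l # Js))) =
     (\<Sum>l\<in>{1..n}. \<Sum>R'\<in>permutations_of_set S. \<Sum>R\<in>permutations_of_set A.
        scalar ((- qi) ^ list_inv R') * (scalar ((- q) ^ list_inv R) * mono (zip R (Cs @ l # Ds), zip R' (l # Js))))"
    unfolding expand ..
  also have "\<dots> = (\<Sum>R'\<in>permutations_of_set S. \<Sum>R\<in>permutations_of_set A. \<Sum>l\<in>{1..n}.
        scalar ((- qi) ^ list_inv R') * (scalar ((- q) ^ list_inv R) * mono (zip R (Cs @ l # Ds), zip R' (l # Js))))"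
    by (subst sum.swap, rule sum.cong[OF refl], rule sum.swap)
  also have "\<dots> \<in> ideal_gen (det1_rels n q qi)"
  proof (rule ideal_gen_sum, rule ideal_gen_sum)
    fix R' R assume R': "R' \<in> permutations_of_set S" and R: "R \<in> permutations_of_set A"
    have lR: "length R = length Cs + Suc (length Ds)" using R A by (simp add: length_finite_permutations_of_set)
    have lR': "length R' = Suc (length Js)" using R' S by (simp add: length_finite_permutations_of_set)
    obtain h t where ht: "R' = h # t" using lR' by (cases R') auto
    have "R ! length Cs \<in> set R" using lR by (intro nth_mem) simp
    then have i: "R ! length Cs \<in> {1..n}" using R A by (auto simp: permutations_of_set_def)
    have j: "h \<in> {1..n}" using R' S ht by (auto simp: permutations_of_set_def)
    have "(\<Sum>l\<in>{1..n}. scalar ((- qi) ^ list_inv R') * (scalar ((- q) ^ list_inv R) * mono (zip R (Cs @ l # Ds), zip R' (l # Js))))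
       = scalar ((- qi) ^ list_inv R') * (scalar ((- q) ^ list_inv R) * (\<Sum>l\<in>{1..n}. mono (zip (take (length Cs) R) Cs @ (R ! length Cs, l) # zip (drop (Suc (length Cs)) R) Ds, [] @ (h, l) # zip t Js)))"
      by (simp add: sum_distrib_left zip_append_Cons[OF lR] ht)
    also have "\<dots> \<in> ideal_gen (det1_rels n q qi)" by (intro ideal_gen_scalar contraction_in_ideal_context n i j)
    finally show "(\<Sum>l\<in>{1..n}. scalar ((- qi) ^ list_inv R') * (scalar ((- q) ^ list_inv R) * mono (zip R (Cs @ l # Ds), zip R' (l # Js))))
       \<in> ideal_gen (det1_rels n q qi)" .
  qed
  finally show ?thesis .
qed

lemma sum_atLeastAtMost_split:
  fixes s n :: nat
  assumes "s \<in> {1..n}"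
  shows "(\<Sum>l\<in>{1..n}. f l) = (\<Sum>l\<in>{1..<s}. f l) + f s + (\<Sum>l\<in>{s<..n}. f l)"
proof -
  have e: "{1..n} = {1..<s} \<union> insert s {s<..n}" using assms by auto
  show ?thesis unfolding e by (subst sum.union_disjoint) (auto simp: add.assoc)
qed

lemma sum_incr_tuples_Suc:
  assumes "k' \<ge> 1"
  shows "(\<Sum>J\<in>incr_tuples (Suc k') {1..j}. f J) = (\<Sum>J'\<in>incr_tuples k' {1..j}. \<Sum>l\<in>{1..<hd J'}. f (l # J'))"
proof -
  have hdle: "\<And>J'. J' \<in> incr_tuples k' {1..j} \<Longrightarrow> \<forall>x\<in>set J'. hd J' \<le> x"
  proof -
    fix J' assume "J' \<in> incr_tuples k' {1..j}"
    then have "sorted_wrt (<) J'" by (simp add: incr_tuples_def)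
    then show "\<forall>x\<in>set J'. hd J' \<le> x" by (cases J') (auto simp: less_imp_le)
  qed
  have ne: "\<And>J'. J' \<in> incr_tuples k' {1..j} \<Longrightarrow> J' \<noteq> []" using assms by (auto simp: incr_tuples_def)
  have e: "incr_tuples (Suc k') {1..j} = (\<Union>J'\<in>incr_tuples k' {1..j}. (\<lambda>l. l # J') ` {1..<hd J'})"
  proof (rule set_eqI, rule iffI)
    fix J assume J: "J \<in> incr_tuples (Suc k') {1..j}"
    then obtain x J'' where xJ: "J = x # J''" by (cases J) (auto simp: incr_tuples_def)
    have J'': "J'' \<in> incr_tuples k' {1..j}" using J xJ by (auto simp: incr_tuples_def)
    have "J'' \<noteq> []" by (rule ne[OF J''])
    then have "x < hd J''" using J xJ by (cases J'') (auto simp: incr_tuples_def)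
    moreover have "x \<ge> 1" using J xJ by (auto simp: incr_tuples_def)
    ultimately have "J \<in> (\<lambda>l. l # J'') ` {1..<hd J''}" unfolding xJ by (intro image_eqI[where x=x]) auto
    then show "J \<in> (\<Union>J'\<in>incr_tuples k' {1..j}. (\<lambda>l. l # J') ` {1..<hd J'})" using J'' by blast
  next
    fix J assume "J \<in> (\<Union>J'\<in>incr_tuples k' {1..j}. (\<lambda>l. l # J') ` {1..<hd J'})"
    then obtain J' l where J': "J' \<in> incr_tuples k' {1..j}" and l: "l \<in> {1..<hd J'}" and J: "J = l # J'" by blast
    have "\<forall>x\<in>set J'. l < x" using hdle[OF J'] l by fastforce
    moreover have "hd J' \<in> set J'" using ne[OF J'] by simp
    then have "hd J' \<le> j" using J' by (auto simp: incr_tuples_def)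
    ultimately show "J \<in> incr_tuples (Suc k') {1..j}" using J' l J by (auto simp: incr_tuples_def)
  qed
  have "(\<Sum>J\<in>incr_tuples (Suc k') {1..j}. f J) = (\<Sum>J'\<in>incr_tuples k' {1..j}. \<Sum>J\<in>(\<lambda>l. l # J') ` {1..<hd J'}. f J)"
    unfolding e by (rule sum.UNION_disjoint) (auto simp: finite_incr_tuples)
  also have "\<dots> = (\<Sum>J'\<in>incr_tuples k' {1..j}. \<Sum>l\<in>{1..<hd J'}. f (l # J'))"
    by (rule sum.cong[OF refl], subst sum.reindex) (auto simp: inj_on_def)
  finally show ?thesis .
qed

lemma q2_minus_1_cancel_identity:
  fixes Q Qi :: "'a::comm_ring_1"
  assumes "Q * Qi = 1"
  shows "(Q^2 - 1) * vl = Q^2 * (vl + v + vg) + Q * (wl + v + wg) - (Q + Q^2) * v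
    - (vl - (- Q) * wl) - Q^2 * (vg - (- Qi) * wg)"
proof -
  have "Q^2 * (Qi * wg) = Q * ((Q * Qi) * wg)" by (simp add: power2_eq_square mult_ac)
  then have "Q^2 * (Qi * wg) = Q * wg" using assms by simp
  then show ?thesis by (simp add: algebra_simps)
qed

lemma q2_minus_1_cancel:
  fixes q qi :: "'r::comm_ring_1"
  assumes qq: "q * qi = 1" and "v \<in> ideal_gen G" "vl + v + vg \<in> ideal_gen G" "wl + v + wg \<in> ideal_gen G"
    and "cong_ideal G vl (scalar (- q) * wl)" "cong_ideal G vg (scalar (- qi) * wg)"
  shows "scalar (q^2 - 1) * vl \<in> ideal_gen G"
proof -
  have "scalar q * scalar qi = (1 :: 'r elt)" using qq by (simp add: scalar_mult[symmetric] scalar_one)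
  from q2_minus_1_cancel_identity[OF this, of vl v vg wl wg]
  have "scalar (q^2 - 1) * vl = scalar (q^2) * (vl + v + vg) + scalar q * (wl + v + wg) - scalar (q + q^2) * v
    - (vl - scalar (- q) * wl) - scalar (q^2) * (vg - scalar (- qi) * wg)"
    by (simp add: scalar_diff scalar_add scalar_minus scalar_power scalar_one)
  also have "\<dots> \<in> ideal_gen G"
    using assms(2-6) unfolding cong_ideal_def by (meson ideal_gen_diff ideal_gen_add ideal_gen_scalar)
  finally show ?thesis .
qed

text \<open>
  V l and W l below differ in the order of the two smallest columns of the x-minor. Contracting l
  over all of {1..n} puts both sums into the ideal; V s vanishes, and swapping the two columns costs
  -q for l < s and -q^-1 for l > s.
\<close>

lemma q2_minus_1_lower_contraction_in_ideal:
  fixes q qi :: "'r::comm_ring_1"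
  assumes qq: "q * qi = 1" and n: "n \<ge> 1" and s: "s \<in> {1..n}"
    and A: "finite A" "A \<subseteq> {1..n}" "card A = Suc (Suc (length T))"
    and S: "finite S" "S \<subseteq> {1..n}" "card S = Suc (Suc (length T))"
  shows "scalar (q^2 - 1) * (\<Sum>l\<in>{1..<s}. amul (qminor X q A (rev T @ [s, l])) (qminor Xs qi S (l # s # T)))
    \<in> ideal_gen (det1_rels n q qi)"
proof -
  let ?G = "det1_rels n q qi"
  define V where "V l = amul (qminor X q A (rev T @ [s, l])) (qminor Xs qi S (l # s # T))" for l
  define W where "W l = amul (qminor X q A (rev T @ [l, s])) (qminor Xs qi S (l # s # T))" for l
  have gX: "qmatrix_mod n X q qi ?G" by (rule qmatrix_mod_X[OF qq])
  have cA: "card A = length (rev T) + Suc (Suc (length ([]::nat list)))" using A(3) by simp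
  have swap: "cong_ideal ?G (V l) (scalar c * W l)"
    if "cong_ideal ?G (qminor X q A (rev T @ [s, l])) (scalar c * qminor X q A (rev T @ [l, s]))" for l c
    using cong_ideal_amul_right[OF fin_supp_qminor[OF monomial_gens_Xs] that]
    by (simp add: V_def W_def amul_scalar_left)
  have "V s \<in> ideal_gen ?G"
    using qminor_repeated_col_in_ideal[OF gX s A(1,2) cA]
    unfolding V_def by (intro ideal_gen_amul_right fin_supp_qminor monomial_gens_Xs) simp
  moreover have "(\<Sum>l\<in>{1..n}. V l) \<in> ideal_gen ?G"
    using contraction_minor_pair_in_ideal[OF n A(1,2) _ S(1,2), where Cs="rev T @ [s]" and Ds="[]" and Js="s # T"]
      A(3) S(3) by (simp add: V_def)
  then have "(\<Sum>l\<in>{1..<s}. V l) + V s + (\<Sum>l\<in>{s<..n}. V l) \<in> ideal_gen ?G"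
    by (simp only: sum_atLeastAtMost_split[OF s])
  moreover have "(\<Sum>l\<in>{1..n}. W l) \<in> ideal_gen ?G"
    using contraction_minor_pair_in_ideal[OF n A(1,2) _ S(1,2), where Cs="rev T" and Ds="[s]" and Js="s # T"]
      A(3) S(3) by (simp add: W_def)
  then have "(\<Sum>l\<in>{1..<s}. W l) + V s + (\<Sum>l\<in>{s<..n}. W l) \<in> ideal_gen ?G"
    by (simp only: sum_atLeastAtMost_split[OF s]) (simp add: V_def W_def)
  moreover have "cong_ideal ?G (\<Sum>l\<in>{1..<s}. V l) (scalar (- q) * (\<Sum>l\<in>{1..<s}. W l))"
    unfolding sum_distrib_left
    by (intro cong_ideal_sum swap qminor_swap_cols[OF gX s _ _ A(1,2) cA]) (use s in auto)
  moreover have "cong_ideal ?G (\<Sum>l\<in>{s<..n}. V l) (scalar (- qi) * (\<Sum>l\<in>{s<..n}. W l))"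
    unfolding sum_distrib_left
    by (intro cong_ideal_sum swap qminor_swap_cols_inv[OF gX _ s _ A(1,2) cA]) (use s in auto)
  ultimately show ?thesis unfolding V_def[symmetric] by (rule q2_minus_1_cancel[OF qq])
qed

lemma q2_minus_1_minor_pair_sum_in_ideal:
  fixes q qi :: "'r::comm_ring_1"
  assumes qq: "q * qi = 1" and n: "n \<ge> 1" and j: "j \<le> n" and k: "k \<ge> 2"
    and A: "finite A" "A \<subseteq> {1..n}" "card A = k" and S: "finite S" "S \<subseteq> {1..n}" "card S = k"
  shows "scalar (q^2 - 1) * minor_pair_sum q qi A S k {1..j} \<in> ideal_gen (det1_rels n q qi)"
proof -
  obtain k' where k': "k = Suc k'" "k' \<ge> 1" using k by (cases k) auto
  have "scalar (q^2 - 1) * minor_pair_sum q qi A S k {1..j} = (\<Sum>J\<in>incr_tuples k' {1..j}.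
      scalar (q^2 - 1) * (\<Sum>l\<in>{1..<hd J}. amul (qminor X q A (rev (l # J))) (qminor Xs qi S (l # J))))"
    unfolding minor_pair_sum_def k'(1) sum_incr_tuples_Suc[OF k'(2)] by (simp add: sum_distrib_left)
  also have "\<dots> \<in> ideal_gen (det1_rels n q qi)"
  proof (rule ideal_gen_sum)
    fix J assume J: "J \<in> incr_tuples k' {1..j}"
    then obtain s T where J_eq: "J = s # T" using k'(2) by (cases J) (auto simp: incr_tuples_def)
    have "s \<in> {1..n}" "length T = k' - 1" using J J_eq j by (auto simp: incr_tuples_def)
    then show "scalar (q^2 - 1) * (\<Sum>l\<in>{1..<hd J}. amul (qminor X q A (rev (l # J))) (qminor Xs qi S (l # J)))
      \<in> ideal_gen (det1_rels n q qi)"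
      using q2_minus_1_lower_contraction_in_ideal[OF qq n _ A(1,2) _ S(1,2), of s T] A(3) S(3) k'
      by (simp add: J_eq)
  qed
  finally show ?thesis .
qed

lemma minor_pair_sum_cong_complement:
  fixes q qi :: "'r::comm_ring_1"
  assumes qq: "q * qi = 1" and n: "n \<ge> 1" and D: "D \<subseteq> {1..n}"
    and A: "finite A" "A \<subseteq> {1..n}" "card A = k" and S: "finite S" "S \<subseteq> {1..n}" "card S = k"
  shows "cong_ideal (det1_rels n q qi) (minor_pair_sum q qi A S k D)
     (scalar ((-1) ^ k) * minor_pair_sum q qi A S k ({1..n} - D))"
proof -
  let ?s = "sorted_list_of_set S"
  have "cong_ideal (det1_rels n q qi) (minor_pair_sum q qi A S k D) (tuple_sum q A ?s k D)"
    by (rule cong_ideal_sym, rule tuple_sum_cong_minor_pair_sum[OF qq n D A S])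
  also have "cong_ideal (det1_rels n q qi) \<dots> (scalar ((-1) ^ k) * tuple_sum q A ?s k ({1..n} - D))"
    by (rule tuple_sum_cong_complement[OF n D A]) (use S in auto)
  also have "cong_ideal (det1_rels n q qi) \<dots> (scalar ((-1) ^ k) * minor_pair_sum q qi A S k ({1..n} - D))"
    by (rule cong_ideal_scalar, rule tuple_sum_cong_minor_pair_sum[OF qq n _ A S]) auto
  finally show ?thesis .
qed

lemma minor_pair_sum_q_power_cong:
  fixes q qi :: "'r::comm_ring_1"
  assumes qq: "q * qi = 1" and n: "n \<ge> 1" and k: "k \<ge> 1" and j: "j \<le> n"
    and A: "finite A" "A \<subseteq> {1..n}" "card A = k" and S: "finite S" "S \<subseteq> {1..n}" "card S = k"
  shows "cong_ideal (det1_rels n q qi) (scalar (q ^ (2 * (\<Sum>i<k. i))) * minor_pair_sum q qi A S k {1..j})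
     (minor_pair_sum q qi A S k {1..j})"
proof (cases "k = 1")
  case True
  then show ?thesis by (simp add: scalar_one)
next
  case False
  define N where "N = (\<Sum>i<k. i)"
  have pw: "q ^ (2 * N) = 1 + (q^2 - 1) * (\<Sum>i<N. (q^2)^i)"
    using power_diff_1_eq[of "q^2" N] by (simp add: power_mult diff_eq_eq add.commute)
  have "scalar (q ^ (2 * N)) * minor_pair_sum q qi A S k {1..j} - minor_pair_sum q qi A S k {1..j}
     = scalar (\<Sum>i<N. (q^2)^i) * (scalar (q^2 - 1) * minor_pair_sum q qi A S k {1..j})"
    unfolding pw scalar_add scalar_mult scalar_one by (simp add: algebra_simps)
  also have "\<dots> \<in> ideal_gen (det1_rels n q qi)"
    using False k by (intro ideal_gen_scalar q2_minus_1_minor_pair_sum_in_ideal[OF qq n j _ A S]) simp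
  finally show ?thesis unfolding cong_ideal_def N_def .
qed

lemma minor_pair_sum_cong:
  fixes q qi :: "'r::comm_ring_1"
  assumes qq: "q * qi = 1" and n: "n \<ge> 1" and k: "k \<ge> 1" and j: "j \<in> {1..n}"
    and A: "finite A" "A \<subseteq> {1..n}" "card A = k" and S: "finite S" "S \<subseteq> {1..n}" "card S = k"
  shows "cong_ideal (det1_rels n q qi) (minor_pair_sum q qi A S k {j<..n})
    (scalar ((-1) ^ k * q ^ (2 * (\<Sum>i<k. i))) * minor_pair_sum q qi A S k {1..j})"
proof -
  let ?G = "det1_rels n q qi" and ?P = "minor_pair_sum q qi A S k"
  have D: "{j<..n} \<subseteq> {1..n}" and compl: "{1..n} - {j<..n} = {1..j}" using j by auto
  have "cong_ideal ?G (?P {j<..n}) (scalar ((-1) ^ k) * ?P {1..j})"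
    using minor_pair_sum_cong_complement[OF qq n D A S] unfolding compl .
  also have "cong_ideal ?G \<dots> (scalar ((-1) ^ k) * (scalar (q ^ (2 * (\<Sum>i<k. i))) * ?P {1..j}))"
    by (rule cong_ideal_scalar, rule cong_ideal_sym, rule minor_pair_sum_q_power_cong[OF qq n k _ A S])
      (use j in simp)
  finally show ?thesis by (simp only: scalar_mult mult.assoc)
qed

lemma minor_sum_eq_minor_pair_sum:
  assumes "distinct r" "distinct s" "length r = k" "length s = k"
  shows "(\<Sum>js\<in>incr_tuples k D. amul (rminor q qi r (rev js)) (rminor_star q qi s js))
    = scalar ((- qi) ^ list_inv r * (- q) ^ list_inv s) * minor_pair_sum q qi (set r) (set s) k D"
  unfolding minor_pair_sum_def sum_distrib_left
proof (rule sum.cong[OF refl])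
  fix js assume "js \<in> incr_tuples k D"
  then have "length (rev js) = length r" "length js = length s" using assms by (auto simp: incr_tuples_def)
  then show "amul (rminor q qi r (rev js)) (rminor_star q qi s js) = scalar ((- qi) ^ list_inv r * (- q) ^ list_inv s) *
      amul (qminor X q (set r) (rev js)) (qminor Xs qi (set s) js)"
    using assms by (simp add: rminor_eq_qminor rminor_star_eq_qminor amul_scalar_left amul_scalar_right
        scalar_mult mult.assoc)
qed

theorem lemma6p7:
  fixes q qi :: "'r::comm_ring_1" and n k j :: nat and r s :: "nat list"
  assumes "q * qi = 1"
    and "n \<ge> 1" and "k \<ge> 1"
    and "length r = k" and "set r \<subseteq> {1..n}"
    and "length s = k" and "set s \<subseteq> {1..n}"
    and "j \<in> {1..n}"
  shows "cong_det1 n q qi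
     (asum (\<lambda>js. amul (rminor q qi r (rev js)) (rminor_star q qi s js))
        {js. length js = k \<and> sorted_wrt (<) js \<and> set js \<subseteq> {j<..n}})
     (asmult ((-1) ^ k * q ^ (2 * (\<Sum>i<k. i)))
        (asum (\<lambda>js. amul (rminor q qi r (rev js)) (rminor_star q qi s js))
           {js. length js = k \<and> sorted_wrt (<) js \<and> set js \<subseteq> {1..j}}))"
proof -
  let ?M = "\<lambda>D. \<Sum>js\<in>incr_tuples k D. amul (rminor q qi r (rev js)) (rminor_star q qi s js)"
  let ?G = "det1_rels n q qi"
  have "cong_ideal ?G (?M {j<..n}) (scalar ((-1) ^ k * q ^ (2 * (\<Sum>i<k. i))) * ?M {1..j})"
  proof (cases "distinct r \<and> distinct s")
    case True
    let ?d = "(- qi) ^ list_inv r * (- q) ^ list_inv s" and ?P = "minor_pair_sum q qi (set r) (set s) k"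
    have "finite (set r)" "set r \<subseteq> {1..n}" "card (set r) = k" "finite (set s)" "set s \<subseteq> {1..n}" "card (set s) = k"
      using assms(4-7) True by (simp_all add: distinct_card)
    from cong_ideal_scalar[OF minor_pair_sum_cong[OF assms(1-3,8) this], of ?d]
    have "cong_ideal ?G (scalar ?d * ?P {j<..n}) (scalar ((-1) ^ k * q ^ (2 * (\<Sum>i<k. i))) * (scalar ?d * ?P {1..j}))"
      by (simp only: mult.left_commute)
    moreover have "?M D = scalar ?d * ?P D" for D
      using True assms(4,6) by (intro minor_sum_eq_minor_pair_sum) auto
    ultimately show ?thesis by simp
  next
    case False
    then have "amul (rminor q qi r C) (rminor_star q qi s C') = 0" for C C'
      by (auto simp: rminor_not_distinct rminor_star_not_distinct amul_zero_left amul_zero_right)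
    then show ?thesis by simp
  qed
  then show ?thesis
    unfolding cong_det1_def cong_ideal_def asub_eq_minus asmult_eq_scalar asum_eq_sum incr_tuples_def .
qed

end
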